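(* For any TI Pauli topological subsystem code on an $L\times L$ torus, let $\mathsf{E}$ be the set of Pauli operators whose support has linear size less than $L/2-\ell_S$. Then $\mathsf{E}$ is a correctable set of errors; more precisely, for any $E_1,E_2\in\mathsf{E}$ there is a gauge operator $G\in\mathcal{G}$ such that $$\Pi_{\tilde C}\,E_1E_2^\dagger\,\Pi_{\tilde C}\ \propto\ G\,\Pi_{\tilde C},$$ where $\Pi_{\tilde C}$ is the projector onto $\mathcal{H}_{\tilde C}=\{|\psi\rangle: S|\psi\rangle=|\psi\rangle\ \forall S\in\tilde{\mathcal{S}}\}$.
   Context: Qudits of arbitrary (possibly composite) dimension $N$ with generalized Pauli operators $X=\sum_\alpha|\alpha+1\rangle\langle\alpha|$, $Z=\sum_\alpha e^{2\pi i\alpha/N}|\alpha\rangle\langle\alpha|$; $\mathcal{P}$ is the group of finite products of single-site Paulis times phases. A subsystem code: gauge group $\mathcal{G}\le\mathcal{P}$ (containing all phases) and stabilizer group $\mathcal{S}$ (abelian, no nontrivial multiple of identity) with $\mathcal{Z}(\mathcal{G})\propto\mathcal{S}$ ("$\propto$" = equal up to phases). A 2D TI topological subsystem code: (i) $\mathcal{G}$ is translation invariant; (ii) $\mathcal{G}$ is generated by operators of linear size $<\ell_G$; (iii) on the infinite plane $\mathcal{S}$ is generated by operators of linear size $<\ell_S$ and $\mathcal{Z}_{\mathcal{P}}(\mathcal{S})\propto\mathcal{G}$ ($\mathcal{Z}_{\mathcal{P}}$ = centralizer in $\mathcal{P}$). On the torus, $\tilde{\mathcal{S}}$ is the subgroup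 of $\mathcal{S}$ generated by local stabilizers (linear size $<\ell_S$). A set of errors $\mathsf{E}$ is correctable if for all $E_1,E_2\in\mathsf{E}$, $\Pi E_1E_2^\dagger\Pi\propto G\Pi$ for some gauge operator $G$, with $\Pi$ the code-space projector. *)

theory Defs
  imports "HOL-Analysis.Analysis"
begin

type_synonym site = "int \<times> int"
type_synonym pvec = "site \<Rightarrow> int"          \<comment> \<open>exponent vector, entries in {0..<N}\<close>
type_synonym conf = "site \<Rightarrow> int"          \<comment> \<open>computational basis label\<close>
type_synonym op = "conf \<Rightarrow> conf \<Rightarrow> complex"  \<comment> \<open>matrix kernel: A beta alpha = <beta|A|alpha>\<close>

text \<open>Support of a Pauli (mod phase) X^a Z^b.\<close>
definition psupp :: "pvec \<times> pvec \<Rightarrow> site set" where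
  "psupp v = {p. fst v p \<noteq> 0 \<or> snd v p \<noteq> 0}"

text \<open>Linear size on the plane: the set fits in a d x d square of sites (d sites per side).\<close>
definition plane_linsize_lt :: "site set \<Rightarrow> real \<Rightarrow> bool" where
  "plane_linsize_lt A r \<longleftrightarrow>
     (\<exists>x0 y0 (d::nat). real d < r \<and> A \<subseteq> {x0..<x0 + int d} \<times> {y0..<y0 + int d})"

definition pvecs :: "nat \<Rightarrow> (pvec \<times> pvec) set" where
  "pvecs N = {v. finite (psupp v) \<and> (\<forall>p. 0 \<le> fst v p \<and> fst v p < int N \<and> 0 \<le> snd v p \<and> snd v p < int N)}"

definition padd :: "nat \<Rightarrow> pvec \<times> pvec \<Rightarrow> pvec \<times> pvec \<Rightarrow> pvec \<times> pvec" where
  "padd N v w = ((\<lambda>p. (fst v p + fst w p) mod int N), (\<lambda>p. (snd v p + snd w p) mod int N))"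

definition pneg :: "nat \<Rightarrow> pvec \<times> pvec \<Rightarrow> pvec \<times> pvec" where
  "pneg N v = ((\<lambda>p. (- fst v p) mod int N), (\<lambda>p. (- snd v p) mod int N))"

definition pzero :: "pvec \<times> pvec" where
  "pzero = ((\<lambda>_. 0), (\<lambda>_. 0))"

text \<open>X^a Z^b and X^a' Z^b' commute iff b.a' = b'.a (mod N).\<close>
definition pcomm :: "nat \<Rightarrow> pvec \<times> pvec \<Rightarrow> pvec \<times> pvec \<Rightarrow> bool" where
  "pcomm N v w \<longleftrightarrow>
     (\<Sum>p\<in>psupp v \<union> psupp w. snd v p * fst w p - snd w p * fst v p) mod int N = 0"

definition plane_subgroup :: "nat \<Rightarrow> (pvec \<times> pvec) set \<Rightarrow> bool" where
  "plane_subgroup N H \<longleftrightarrow> H \<subseteq> pvecs N \<and> pzero \<in> H \<and>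
     (\<forall>v\<in>H. \<forall>w\<in>H. padd N v w \<in> H) \<and> (\<forall>v\<in>H. pneg N v \<in> H)"

definition plane_span :: "nat \<Rightarrow> (pvec \<times> pvec) set \<Rightarrow> (pvec \<times> pvec) set" where
  "plane_span N X = \<Inter>{H. plane_subgroup N H \<and> X \<subseteq> H}"

definition pshift :: "site \<Rightarrow> pvec \<times> pvec \<Rightarrow> pvec \<times> pvec" where
  "pshift u v = ((\<lambda>p. fst v (fst p - fst u, snd p - snd u)), (\<lambda>p. snd v (fst p - fst u, snd p - snd u)))"

text \<open>Center of the gauge group (mod phases); this is S up to phases.\<close>
definition plane_center :: "nat \<Rightarrow> (pvec \<times> pvec) set \<Rightarrow> (pvec \<times> pvec) set" where
  "plane_center N G = {g\<in>G. \<forall>h\<in>G. pcomm N g h}"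

text \<open>A 2D translation-invariant topological subsystem code, given by its gauge group
  on the infinite plane (which contains all phases, hence is represented modulo phases),
  with locality parameters lG, lS.\<close>
definition ti_topo_subsys_code :: "nat \<Rightarrow> nat \<Rightarrow> nat \<Rightarrow> (pvec \<times> pvec) set \<Rightarrow> bool" where
  "ti_topo_subsys_code N lG lS G \<longleftrightarrow>
     plane_subgroup N G \<and>
     (\<forall>u. \<forall>g\<in>G. pshift u g \<in> G) \<and>
     G = plane_span N {g\<in>G. plane_linsize_lt (psupp g) (real lG)} \<and>
     plane_center N G = plane_span N {s\<in>plane_center N G. plane_linsize_lt (psupp s) (real lS)} \<and>
     {p\<in>pvecs N. \<forall>s\<in>plane_center N G. pcomm N p s} = G"

definition torus_sites :: "nat \<Rightarrow> site set" where
  "torus_sites L = {0..<int L} \<times> {0..<int L}"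

definition torus_linsize_lt :: "nat \<Rightarrow> site set \<Rightarrow> real \<Rightarrow> bool" where
  "torus_linsize_lt L A r \<longleftrightarrow>
     (\<exists>x0 y0 (d::nat). real d < r \<and>
        A \<subseteq> {((x0 + i) mod int L, (y0 + j) mod int L) | i j. 0 \<le> i \<and> i < int d \<and> 0 \<le> j \<and> j < int d})"

definition tvecs :: "nat \<Rightarrow> nat \<Rightarrow> pvec set" where
  "tvecs L N = {a. (\<forall>s\<in>torus_sites L. 0 \<le> a s \<and> a s < int N) \<and> (\<forall>s. s \<notin> torus_sites L \<longrightarrow> a s = 0)}"

definition confs :: "nat \<Rightarrow> nat \<Rightarrow> conf set" where
  "confs L N = tvecs L N"

text \<open>Generalized Pauli X^a Z^b on the torus: X^a Z^b |alpha> = omega^(b.alpha) |alpha + a>,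
  omega = exp(2 pi i / N). Kernels vanish outside the basis labels.\<close>
definition W :: "nat \<Rightarrow> nat \<Rightarrow> pvec \<Rightarrow> pvec \<Rightarrow> op" where
  "W L N a b = (\<lambda>\<beta> \<alpha>. if \<beta> \<in> confs L N \<and> \<alpha> \<in> confs L N \<and>
                          (\<forall>s\<in>torus_sites L. \<beta> s = (\<alpha> s + a s) mod int N)
                       then cis (2 * pi * of_int (\<Sum>s\<in>torus_sites L. b s * \<alpha> s) / real N)
                       else 0)"

definition smult_op :: "complex \<Rightarrow> op \<Rightarrow> op" where
  "smult_op c A = (\<lambda>\<beta> \<alpha>. c * A \<beta> \<alpha>)"

definition mult_op :: "nat \<Rightarrow> nat \<Rightarrow> op \<Rightarrow> op \<Rightarrow> op" where
  "mult_op L N A B = (\<lambda>\<beta> \<alpha>. if \<beta> \<in> confs L N \<and> \<alpha> \<in> confs L N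
                              then (\<Sum>\<gamma>\<in>confs L N. A \<beta> \<gamma> * B \<gamma> \<alpha>) else 0)"

definition adj_op :: "op \<Rightarrow> op" where
  "adj_op A = (\<lambda>\<beta> \<alpha>. cnj (A \<alpha> \<beta>))"

definition id_op :: "nat \<Rightarrow> nat \<Rightarrow> op" where
  "id_op L N = (\<lambda>\<beta> \<alpha>. if \<beta> \<in> confs L N \<and> \<alpha> = \<beta> then 1 else 0)"

definition apply_op :: "nat \<Rightarrow> nat \<Rightarrow> op \<Rightarrow> (conf \<Rightarrow> complex) \<Rightarrow> (conf \<Rightarrow> complex)" where
  "apply_op L N A \<psi> = (\<lambda>\<beta>. \<Sum>\<alpha>\<in>confs L N. A \<beta> \<alpha> * \<psi> \<alpha>)"

definition torus_paulis :: "nat \<Rightarrow> nat \<Rightarrow> op set" where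
  "torus_paulis L N = {smult_op c (W L N a b) | c a b. cmod c = 1 \<and> a \<in> tvecs L N \<and> b \<in> tvecs L N}"

definition tsupp :: "pvec \<Rightarrow> pvec \<Rightarrow> site set" where
  "tsupp a b = {s. a s \<noteq> 0 \<or> b s \<noteq> 0}"

definition op_linsize_lt :: "nat \<Rightarrow> nat \<Rightarrow> op \<Rightarrow> real \<Rightarrow> bool" where
  "op_linsize_lt L N A r \<longleftrightarrow>
     (\<exists>c a b. cmod c = 1 \<and> a \<in> tvecs L N \<and> b \<in> tvecs L N \<and> A = smult_op c (W L N a b) \<and>
              torus_linsize_lt L (tsupp a b) r)"

text \<open>Periodic identification Z^2 -> Z_L^2 of a finitely supported exponent vector.\<close>
definition wrap :: "nat \<Rightarrow> nat \<Rightarrow> pvec \<Rightarrow> pvec" where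
  "wrap L N a = (\<lambda>s. if s \<in> torus_sites L
       then (\<Sum>p\<in>{p. a p \<noteq> 0 \<and> (fst p mod int L, snd p mod int L) = s}. a p) mod int N
       else 0)"

text \<open>Gauge group of the code on the L x L torus: all phases times the periodic images of
  the plane gauge operators (equivalently, generated by the periodic images of the local
  translation-invariant gauge generators).\<close>
definition gauge_ops :: "nat \<Rightarrow> nat \<Rightarrow> (pvec \<times> pvec) set \<Rightarrow> op set" where
  "gauge_ops L N G = {smult_op c (W L N (wrap L N (fst g)) (wrap L N (snd g))) | c g. cmod c = 1 \<and> g \<in> G}"

definition op_center :: "nat \<Rightarrow> nat \<Rightarrow> op set \<Rightarrow> op set" where
  "op_center L N H = {M\<in>H. \<forall>K\<in>H. mult_op L N M K = mult_op L N K M}"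

definition prop_sets :: "op set \<Rightarrow> op set \<Rightarrow> bool" where
  "prop_sets A B \<longleftrightarrow> (\<forall>x\<in>A. \<exists>c. cmod c = 1 \<and> smult_op c x \<in> B) \<and>
                      (\<forall>y\<in>B. \<exists>c. cmod c = 1 \<and> smult_op c y \<in> A)"

definition op_group :: "nat \<Rightarrow> nat \<Rightarrow> op set \<Rightarrow> bool" where
  "op_group L N H \<longleftrightarrow> id_op L N \<in> H \<and> (\<forall>A\<in>H. \<forall>B\<in>H. mult_op L N A B \<in> H) \<and>
                       (\<forall>A\<in>H. adj_op A \<in> H)"

definition op_group_gen :: "nat \<Rightarrow> nat \<Rightarrow> op set \<Rightarrow> op set" where
  "op_group_gen L N X = \<Inter>{H. op_group L N H \<and> X \<subseteq> H}"

definition torus_stabilizer_group :: "nat \<Rightarrow> nat \<Rightarrow> (pvec \<times> pvec) set \<Rightarrow> op set \<Rightarrow> bool" where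
  "torus_stabilizer_group L N G S \<longleftrightarrow>
     S \<subseteq> torus_paulis L N \<and> op_group L N S \<and>
     (\<forall>A\<in>S. \<forall>B\<in>S. mult_op L N A B = mult_op L N B A) \<and>
     (\<forall>c. smult_op c (id_op L N) \<in> S \<longrightarrow> c = 1) \<and>
     prop_sets (op_center L N (gauge_ops L N G)) S"

definition local_stab :: "nat \<Rightarrow> nat \<Rightarrow> nat \<Rightarrow> op set \<Rightarrow> op set" where
  "local_stab L N lS S = op_group_gen L N {A\<in>S. op_linsize_lt L N A (real lS)}"

definition code_space :: "nat \<Rightarrow> nat \<Rightarrow> op set \<Rightarrow> (conf \<Rightarrow> complex) set" where
  "code_space L N T = {\<psi>. (\<forall>\<alpha>. \<alpha> \<notin> confs L N \<longrightarrow> \<psi> \<alpha> = 0) \<and> (\<forall>A\<in>T. apply_op L N A \<psi> = \<psi>)}"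

definition is_proj_onto :: "nat \<Rightarrow> nat \<Rightarrow> op \<Rightarrow> (conf \<Rightarrow> complex) set \<Rightarrow> bool" where
  "is_proj_onto L N P V \<longleftrightarrow>
     (\<forall>\<beta> \<alpha>. \<beta> \<notin> confs L N \<or> \<alpha> \<notin> confs L N \<longrightarrow> P \<beta> \<alpha> = 0) \<and>
     mult_op L N P P = P \<and> adj_op P = P \<and>
     (\<forall>\<psi>. apply_op L N P \<psi> \<in> V) \<and> (\<forall>\<psi>\<in>V. apply_op L N P \<psi> = \<psi>)"

definition small_errors :: "nat \<Rightarrow> nat \<Rightarrow> nat \<Rightarrow> op set" where
  "small_errors L N lS = {E\<in>torus_paulis L N. op_linsize_lt L N E (real L / 2 - real lS)}"

end

theory Submission
  imports Defs
begin

text \<open>Up to a phase, E1 times the adjoint of E2 is a single Pauli E supported in the images of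
  two boxes of side less than L/2 - lS. If E fails to commute with some local stabilizer A,
  then P E P = \<omega> P E P for a phase \<omega> \<noteq> 1, so P E P = 0. Otherwise E is lifted box by box to
  a Pauli on the plane; the boxes are placed so that a local plane stabilizer meets at most one
  periodic copy of them, hence the lift commutes with every local element of the centre of the
  gauge group, hence with the whole centre, and by the topological condition it is a gauge
  operator. Its periodic image E then commutes with all stabilizers, so P E P = E P.\<close>

subsection \<open>Phases, basis labels and the torus inner product\<close>

definition omega :: "nat \<Rightarrow> int \<Rightarrow> complex" where
  "omega N x = cis (2 * pi * of_int x / real N)"

definition torus_dot :: "nat \<Rightarrow> pvec \<Rightarrow> pvec \<Rightarrow> int" where
  "torus_dot L b a = (\<Sum>s\<in>torus_sites L. b s * a s)"

definition conf_shift :: "nat \<Rightarrow> nat \<Rightarrow> conf \<Rightarrow> pvec \<Rightarrow> conf" where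
  "conf_shift L N \<alpha> a = (\<lambda>s. if s \<in> torus_sites L then (\<alpha> s + a s) mod int N else 0)"

definition vec_add :: "nat \<Rightarrow> pvec \<Rightarrow> pvec \<Rightarrow> pvec" where
  "vec_add N a a' = (\<lambda>s. (a s + a' s) mod int N)"

definition vec_neg :: "nat \<Rightarrow> pvec \<Rightarrow> pvec" where
  "vec_neg N a = (\<lambda>s. (- a s) mod int N)"

lemma sum_mod_cong:
  assumes "\<And>p. p \<in> F \<Longrightarrow> f p mod (M::int) = g p mod M"
  shows "sum f F mod M = sum g F mod M"
  by (metis (no_types, lifting) assms mod_sum_eq sum.cong)

lemma omega_mod_eq: "x mod int N = y mod int N \<Longrightarrow> omega N x = omega N y"
proof -
  have "omega N (y + int N * k) = omega N y" for y k
  proof (cases "N = 0")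
    case False
    then have "2 * pi * of_int (y + int N * k) / real N = 2 * pi * of_int y / real N + 2 * pi * of_int k"
      by (simp add: field_simps)
    then show ?thesis unfolding omega_def by (simp add: cis_mult[symmetric])
  qed (simp add: omega_def)
  then have "omega N (x mod int N) = omega N x" for x
    by (metis mod_mult_div_eq mult.commute)
  then show "x mod int N = y mod int N \<Longrightarrow> omega N x = omega N y" by metis
qed

lemma omega_add: "omega N (x + y) = omega N x * omega N y"
  unfolding omega_def cis_mult by (simp add: add_divide_distrib distrib_left)

lemma omega_uminus: "omega N (- x) = cnj (omega N x)"
  unfolding omega_def cis_cnj by simp

lemma norm_omega [simp]: "cmod (omega N x) = 1"
  unfolding omega_def by simp

lemma omega_neq_0 [simp]: "omega N x \<noteq> 0"
  using norm_omega[of N x] by (metis norm_zero zero_neq_one)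

lemma omega_0 [simp]: "omega N 0 = 1"
  by (simp add: omega_def)

lemma omega_eq_1_imp_dvd:
  assumes "N > 0" "omega N x = 1" shows "int N dvd x"
proof -
  have "cos (2 * pi * of_int x / real N) = 1" using assms(2) unfolding omega_def
    by (metis Re_complex_of_real cis.sel(1) one_complex.sel(1))
  then obtain n :: int where "2 * pi * of_int x / real N = of_int n * 2 * pi"
    using cos_one_2pi_int by blast
  then have "of_int x = real N * of_int n" using assms(1) by (simp add: field_simps)
  then have "x = int N * n" by (metis of_int_eq_iff of_int_mult of_int_of_nat_eq)
  then show ?thesis by simp
qed

lemma confs_outside: "\<beta> \<in> confs L N \<Longrightarrow> s \<notin> torus_sites L \<Longrightarrow> \<beta> s = 0"
  unfolding confs_def tvecs_def by (cases s) auto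

lemma confs_range: "\<beta> \<in> confs L N \<Longrightarrow> s \<in> torus_sites L \<Longrightarrow> 0 \<le> \<beta> s \<and> \<beta> s < int N"
  unfolding confs_def tvecs_def by auto

lemma tvecs_outside: "a \<in> tvecs L N \<Longrightarrow> s \<notin> torus_sites L \<Longrightarrow> a s = 0"
  unfolding tvecs_def by (cases s) auto

lemma zero_in_confs: "N > 0 \<Longrightarrow> (\<lambda>_. 0) \<in> confs L N"
  unfolding confs_def tvecs_def by auto

lemma conf_shift_in_confs: "N > 0 \<Longrightarrow> conf_shift L N \<alpha> a \<in> confs L N"
  unfolding conf_shift_def confs_def tvecs_def by auto

lemma conf_shift_iff:
  "\<beta> \<in> confs L N \<Longrightarrow>
   (\<forall>s\<in>torus_sites L. \<beta> s = (\<alpha> s + a s) mod int N) \<longleftrightarrow> \<beta> = conf_shift L N \<alpha> a"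
  unfolding conf_shift_def using confs_outside[of \<beta> L N] by (auto simp: fun_eq_iff)

lemma conf_shift_vec_neg_iff:
  assumes "\<alpha> \<in> confs L N" "\<beta> \<in> confs L N"
  shows "\<alpha> = conf_shift L N \<beta> a \<longleftrightarrow> \<beta> = conf_shift L N \<alpha> (vec_neg N a)"
proof -
  have "\<alpha> s = (\<beta> s + a s) mod int N \<longleftrightarrow> \<beta> s = (\<alpha> s + vec_neg N a s) mod int N"
    if "s \<in> torus_sites L" for s
  proof -
    have "\<alpha> s mod int N = \<alpha> s" "\<beta> s mod int N = \<beta> s"
      using confs_range[OF assms(1) that] confs_range[OF assms(2) that] by simp_all
    moreover have "(\<alpha> s + vec_neg N a s) mod int N = (\<alpha> s - a s) mod int N"
      unfolding vec_neg_def by (simp add: mod_add_right_eq)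
    ultimately show ?thesis by (metis add_diff_cancel_right' diff_add_cancel mod_add_left_eq mod_diff_left_eq)
  qed
  then show ?thesis
    using conf_shift_iff[OF assms(1), of \<beta> a] conf_shift_iff[OF assms(2), of \<alpha> "vec_neg N a"] by blast
qed

lemma finite_torus_sites: "finite (torus_sites L)"
  unfolding torus_sites_def by simp

lemma finite_confs: "finite (confs L N)"
proof -
  have "confs L N \<subseteq> {f. \<forall>x. (x \<in> torus_sites L \<longrightarrow> f x \<in> {0..<int N}) \<and> (x \<notin> torus_sites L \<longrightarrow> f x = 0)}"
    unfolding confs_def tvecs_def by auto
  then show ?thesis
    by (rule finite_subset) (intro finite_set_of_finite_funs finite_torus_sites, simp)
qed

lemma vec_add_tvecs: "N > 0 \<Longrightarrow> a \<in> tvecs L N \<Longrightarrow> a' \<in> tvecs L N \<Longrightarrow> vec_add N a a' \<in> tvecs L N"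
  unfolding tvecs_def vec_add_def by auto

lemma vec_neg_tvecs: "N > 0 \<Longrightarrow> a \<in> tvecs L N \<Longrightarrow> vec_neg N a \<in> tvecs L N"
  unfolding tvecs_def vec_neg_def by auto

lemma vec_add_commute: "vec_add N a a' = vec_add N a' a"
  unfolding vec_add_def by (simp add: add.commute)

lemma vec_add_vec_neg: "vec_add N a (vec_neg N a') s = (a s - a' s) mod int N"
  unfolding vec_add_def vec_neg_def by (simp add: mod_add_right_eq)

lemma torus_dot_commute: "torus_dot L a b = torus_dot L b a"
  unfolding torus_dot_def by (simp add: mult.commute)

lemma torus_dot_mod_cong_right:
  assumes "\<And>s. s \<in> torus_sites L \<Longrightarrow> x s mod int N = y s mod int N"
  shows "torus_dot L b x mod int N = torus_dot L b y mod int N"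
  unfolding torus_dot_def using assms by (intro sum_mod_cong) (metis mod_mult_right_eq)

lemma torus_dot_mod_cong_left:
  assumes "\<And>s. s \<in> torus_sites L \<Longrightarrow> x s mod int N = y s mod int N"
  shows "torus_dot L x b mod int N = torus_dot L y b mod int N"
  using torus_dot_mod_cong_right[OF assms] by (simp add: torus_dot_commute)

lemma torus_dot_add_right: "torus_dot L b (\<lambda>s. x s + y s) = torus_dot L b x + torus_dot L b y"
  unfolding torus_dot_def by (simp add: distrib_left sum.distrib)

lemma torus_dot_add_left: "torus_dot L (\<lambda>s. x s + y s) b = torus_dot L x b + torus_dot L y b"
  unfolding torus_dot_def by (simp add: distrib_right sum.distrib)

lemma torus_dot_uminus_left: "torus_dot L (\<lambda>s. - x s) b = - torus_dot L x b"
  unfolding torus_dot_def by (simp add: sum_negf)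

subsection \<open>Operators and generalized Paulis\<close>

lemma mult_op_assoc: "mult_op L N (mult_op L N A B) C = mult_op L N A (mult_op L N B C)"
proof (intro ext)
  fix \<beta> \<alpha>
  have "(\<Sum>\<gamma>\<in>confs L N. (\<Sum>\<delta>\<in>confs L N. A \<beta> \<delta> * B \<delta> \<gamma>) * C \<gamma> \<alpha>)
      = (\<Sum>\<delta>\<in>confs L N. A \<beta> \<delta> * (\<Sum>\<gamma>\<in>confs L N. B \<delta> \<gamma> * C \<gamma> \<alpha>))"
    unfolding sum_distrib_left sum_distrib_right mult.assoc by (rule sum.swap)
  then show "mult_op L N (mult_op L N A B) C \<beta> \<alpha> = mult_op L N A (mult_op L N B C) \<beta> \<alpha>"
    unfolding mult_op_def by (simp cong: sum.cong)
qed

lemma adj_op_mult_op: "adj_op (mult_op L N A B) = mult_op L N (adj_op B) (adj_op A)"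
  unfolding adj_op_def mult_op_def by (auto simp: fun_eq_iff mult.commute)

lemma adj_op_adj_op [simp]: "adj_op (adj_op A) = A"
  unfolding adj_op_def by simp

lemma adj_op_smult_op: "adj_op (smult_op c A) = smult_op (cnj c) (adj_op A)"
  unfolding smult_op_def adj_op_def by auto

lemma mult_op_smult_op_left: "mult_op L N (smult_op c A) B = smult_op c (mult_op L N A B)"
  unfolding smult_op_def mult_op_def by (auto simp: fun_eq_iff sum_distrib_left mult.assoc)

lemma mult_op_smult_op_right: "mult_op L N A (smult_op c B) = smult_op c (mult_op L N A B)"
  unfolding smult_op_def mult_op_def
  by (auto simp: fun_eq_iff sum_distrib_left mult.assoc mult.left_commute)

lemma smult_op_smult_op [simp]: "smult_op c (smult_op d A) = smult_op (c * d) A"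
  unfolding smult_op_def by (auto simp: fun_eq_iff)

lemma smult_op_1 [simp]: "smult_op 1 A = A"
  unfolding smult_op_def by simp

lemma smult_op_cancel: "c \<noteq> 0 \<Longrightarrow> smult_op c A = smult_op c B \<Longrightarrow> A = B"
  unfolding smult_op_def by (auto simp: fun_eq_iff)

lemma smult_op_0: "smult_op 0 A = (\<lambda>_ _. 0)"
  unfolding smult_op_def by simp

lemma W_conf_shift:
  "W L N a b = (\<lambda>\<beta> \<alpha>. if \<beta> \<in> confs L N \<and> \<alpha> \<in> confs L N \<and> \<beta> = conf_shift L N \<alpha> a
                       then omega N (torus_dot L b \<alpha>) else 0)"
  unfolding W_def omega_def torus_dot_def by (intro ext) (metis conf_shift_iff)

lemma W_nonzero:
  assumes "N > 0" and "a \<in> tvecs L N"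
  shows "W L N a b a (\<lambda>_. 0) \<noteq> 0"
proof -
  have "conf_shift L N (\<lambda>_. 0) a = a"
    using assms(2) unfolding conf_shift_def tvecs_def by (auto simp: fun_eq_iff)
  then show ?thesis
    using assms zero_in_confs[OF assms(1)] unfolding W_conf_shift by (simp add: confs_def)
qed

lemma mult_op_W:
  assumes N: "N > 0"
  shows "mult_op L N (W L N a b) (W L N a' b') =
         smult_op (omega N (torus_dot L b a')) (W L N (vec_add N a a') (vec_add N b b'))"
proof (intro ext)
  fix \<beta> \<alpha>
  show "mult_op L N (W L N a b) (W L N a' b') \<beta> \<alpha> =
        smult_op (omega N (torus_dot L b a')) (W L N (vec_add N a a') (vec_add N b b')) \<beta> \<alpha>"
  proof (cases "\<beta> \<in> confs L N \<and> \<alpha> \<in> confs L N")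
    case False then show ?thesis unfolding mult_op_def smult_op_def W_conf_shift by auto
  next
    case True
    define \<gamma> where "\<gamma> = conf_shift L N \<alpha> a'"
    have \<gamma>: "\<gamma> \<in> confs L N" unfolding \<gamma>_def using N by (rule conf_shift_in_confs)
    have "(\<Sum>\<delta>\<in>confs L N. W L N a b \<beta> \<delta> * W L N a' b' \<delta> \<alpha>)
        = (\<Sum>\<delta>\<in>confs L N. if \<delta> = \<gamma> then W L N a b \<beta> \<delta> * omega N (torus_dot L b' \<alpha>) else 0)"
      using True unfolding \<gamma>_def by (intro sum.cong refl) (auto simp: W_conf_shift)
    also have "\<dots> = W L N a b \<beta> \<gamma> * omega N (torus_dot L b' \<alpha>)"
      using \<gamma> finite_confs by (simp add: sum.delta)
    finally have sum_eq: "(\<Sum>\<delta>\<in>confs L N. W L N a b \<beta> \<delta> * W L N a' b' \<delta> \<alpha>)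
        = W L N a b \<beta> \<gamma> * omega N (torus_dot L b' \<alpha>)" .
    have shift: "conf_shift L N \<gamma> a = conf_shift L N \<alpha> (vec_add N a a')"
      unfolding \<gamma>_def conf_shift_def vec_add_def
      by (auto simp: fun_eq_iff mod_add_left_eq mod_add_right_eq ac_simps)
    have "torus_dot L b \<gamma> mod int N = torus_dot L b (\<lambda>s. \<alpha> s + a' s) mod int N"
      by (rule torus_dot_mod_cong_right) (simp add: \<gamma>_def conf_shift_def)
    then have phase1: "omega N (torus_dot L b \<gamma>) = omega N (torus_dot L b \<alpha>) * omega N (torus_dot L b a')"
      by (metis omega_mod_eq omega_add torus_dot_add_right)
    have "torus_dot L (vec_add N b b') \<alpha> mod int N = torus_dot L (\<lambda>s. b s + b' s) \<alpha> mod int N"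
      by (rule torus_dot_mod_cong_left) (simp add: vec_add_def)
    then have phase2: "omega N (torus_dot L (vec_add N b b') \<alpha>)
        = omega N (torus_dot L b \<alpha>) * omega N (torus_dot L b' \<alpha>)"
      by (metis omega_mod_eq omega_add torus_dot_add_left)
    show ?thesis using True \<gamma> unfolding mult_op_def smult_op_def sum_eq
      by (simp add: W_conf_shift shift phase1 phase2)
  qed
qed

lemma W_commute_phase:
  assumes "N > 0"
  shows "mult_op L N (W L N a b) (W L N a' b') =
         smult_op (omega N (torus_dot L b a' - torus_dot L b' a)) (mult_op L N (W L N a' b') (W L N a b))"
proof -
  have "omega N (torus_dot L b a')
      = omega N (torus_dot L b a' - torus_dot L b' a) * omega N (torus_dot L b' a)"
    by (simp add: omega_add[symmetric])
  then show ?thesis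
    unfolding mult_op_W[OF assms] smult_op_smult_op by (simp add: vec_add_commute)
qed

lemma W_commute_iff_dvd:
  assumes N: "N > 0" and "a \<in> tvecs L N" "a' \<in> tvecs L N"
  shows "mult_op L N (W L N a b) (W L N a' b') = mult_op L N (W L N a' b') (W L N a b)
         \<longleftrightarrow> int N dvd torus_dot L b a' - torus_dot L b' a"
proof
  let ?w = "omega N (torus_dot L b a' - torus_dot L b' a)"
  let ?R = "mult_op L N (W L N a' b') (W L N a b)"
  let ?v = "vec_add N a' a"
  assume "mult_op L N (W L N a b) (W L N a' b') = ?R"
  then have R_eq: "?R = smult_op ?w ?R" using W_commute_phase[OF N, of L a b a' b'] by simp
  have "?R ?v (\<lambda>_. 0) \<noteq> 0"
    unfolding mult_op_W[OF N] smult_op_def using W_nonzero[OF N vec_add_tvecs[OF N assms(3,2)]] by simp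
  moreover have "?R ?v (\<lambda>_. 0) = ?w * ?R ?v (\<lambda>_. 0)"
    using fun_cong[OF fun_cong[OF R_eq, of ?v], of "\<lambda>_. 0"] unfolding smult_op_def .
  ultimately have "?w = 1" by simp
  then show "int N dvd torus_dot L b a' - torus_dot L b' a" by (rule omega_eq_1_imp_dvd[OF N])
next
  assume "int N dvd torus_dot L b a' - torus_dot L b' a"
  then have "omega N (torus_dot L b a' - torus_dot L b' a) = omega N 0"
    by (intro omega_mod_eq) simp
  then show "mult_op L N (W L N a b) (W L N a' b') = mult_op L N (W L N a' b') (W L N a b)"
    using W_commute_phase[OF N, of L a b a' b'] by simp
qed

lemma adj_op_W:
  assumes N: "N > 0"
  shows "adj_op (W L N a b) = smult_op (omega N (torus_dot L b a)) (W L N (vec_neg N a) (vec_neg N b))"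
proof (intro ext)
  fix \<beta> \<alpha>
  show "adj_op (W L N a b) \<beta> \<alpha> = smult_op (omega N (torus_dot L b a)) (W L N (vec_neg N a) (vec_neg N b)) \<beta> \<alpha>"
  proof (cases "\<beta> \<in> confs L N \<and> \<alpha> \<in> confs L N \<and> \<alpha> = conf_shift L N \<beta> a")
    case True
    then have shift_back: "\<beta> = conf_shift L N \<alpha> (vec_neg N a)" using conf_shift_vec_neg_iff by blast
    have "torus_dot L b \<alpha> mod int N = torus_dot L b (\<lambda>s. \<beta> s + a s) mod int N"
      using True by (intro torus_dot_mod_cong_right) (simp add: conf_shift_def)
    then have phase1: "omega N (torus_dot L b \<alpha>) = omega N (torus_dot L b \<beta>) * omega N (torus_dot L b a)"
      by (metis omega_mod_eq omega_add torus_dot_add_right)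
    have "torus_dot L (vec_neg N b) \<alpha> mod int N = torus_dot L (\<lambda>s. - b s) \<alpha> mod int N"
      by (intro torus_dot_mod_cong_left) (simp add: vec_neg_def)
    then have phase2: "omega N (torus_dot L (vec_neg N b) \<alpha>) = cnj (omega N (torus_dot L b \<alpha>))"
      by (metis omega_mod_eq omega_uminus torus_dot_uminus_left)
    have lhs: "adj_op (W L N a b) \<beta> \<alpha> = cnj (omega N (torus_dot L b \<beta>))"
      using True conf_shift_in_confs[OF N] unfolding adj_op_def W_conf_shift by auto
    have rhs: "W L N (vec_neg N a) (vec_neg N b) \<beta> \<alpha> = omega N (torus_dot L (vec_neg N b) \<alpha>)"
      using True shift_back unfolding W_conf_shift by (simp only: if_True simp_thms)
    show ?thesis unfolding smult_op_def lhs rhs phase2 phase1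
      by (simp add: omega_uminus[symmetric] omega_add[symmetric])
  next
    case False
    then have "\<not> (\<beta> \<in> confs L N \<and> \<alpha> \<in> confs L N \<and> \<beta> = conf_shift L N \<alpha> (vec_neg N a))"
      using conf_shift_vec_neg_iff by blast
    with False show ?thesis unfolding adj_op_def smult_op_def W_conf_shift by auto
  qed
qed

lemma mult_op_adj_op_paulis:
  assumes N: "N > 0"
  shows "mult_op L N (smult_op c1 (W L N a1 b1)) (adj_op (smult_op c2 (W L N a2 b2))) =
     smult_op (c1 * cnj c2 * omega N (torus_dot L b2 a2) * omega N (torus_dot L b1 (vec_neg N a2)))
        (W L N (vec_add N a1 (vec_neg N a2)) (vec_add N b1 (vec_neg N b2)))"
  unfolding adj_op_smult_op adj_op_W[OF N] mult_op_smult_op_left mult_op_smult_op_right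
    mult_op_W[OF N] smult_op_smult_op by (simp add: mult_ac)

lemma torus_paulis_outside: "A \<in> torus_paulis L N \<Longrightarrow> \<beta> \<notin> confs L N \<Longrightarrow> A \<beta> \<alpha> = 0"
  unfolding torus_paulis_def smult_op_def W_def by auto

subsection \<open>Projectors onto stabilized subspaces\<close>

definition op_col :: "op \<Rightarrow> conf \<Rightarrow> (conf \<Rightarrow> complex)" where
  "op_col Y \<alpha> = (\<lambda>\<beta>. Y \<beta> \<alpha>)"

lemma proj_col_in_range:
  assumes P: "is_proj_onto L N P V" and \<alpha>: "\<alpha> \<in> confs L N"
  shows "op_col P \<alpha> \<in> V"
proof -
  have "apply_op L N P (\<lambda>\<gamma>. if \<gamma> = \<alpha> then 1 else 0) \<beta> = op_col P \<alpha> \<beta>" for \<beta>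
  proof -
    have "(\<Sum>\<gamma>\<in>confs L N. P \<beta> \<gamma> * (if \<gamma> = \<alpha> then 1 else 0)) = (\<Sum>\<gamma>\<in>confs L N. if \<gamma> = \<alpha> then P \<beta> \<gamma> else 0)"
      by (rule sum.cong) auto
    also have "\<dots> = P \<beta> \<alpha>" using \<alpha> finite_confs by (simp add: sum.delta)
    finally show ?thesis unfolding apply_op_def op_col_def .
  qed
  then have "apply_op L N P (\<lambda>\<gamma>. if \<gamma> = \<alpha> then 1 else 0) = op_col P \<alpha>" ..
  with P show ?thesis unfolding is_proj_onto_def by metis
qed

lemma stab_mult_proj:
  assumes P: "is_proj_onto L N P (code_space L N T)" and B: "B \<in> T"
  shows "mult_op L N B P = P"
proof (intro ext)
  fix \<beta> \<alpha>
  show "mult_op L N B P \<beta> \<alpha> = P \<beta> \<alpha>"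
  proof (cases "\<beta> \<in> confs L N \<and> \<alpha> \<in> confs L N")
    case True
    then have "apply_op L N B (op_col P \<alpha>) = op_col P \<alpha>"
      using proj_col_in_range[OF P] B unfolding code_space_def by simp
    then have "apply_op L N B (op_col P \<alpha>) \<beta> = P \<beta> \<alpha>" by (simp add: op_col_def)
    then show ?thesis using True unfolding mult_op_def apply_op_def op_col_def by simp
  next
    case False
    then show ?thesis using P unfolding mult_op_def is_proj_onto_def by auto
  qed
qed

lemma proj_mult_stab:
  assumes P: "is_proj_onto L N P (code_space L N T)" and B: "adj_op B \<in> T"
  shows "mult_op L N P B = P"
proof -
  have "adj_op P = P" using P unfolding is_proj_onto_def by simp
  then show ?thesis
    using arg_cong[OF stab_mult_proj[OF P B], of adj_op] unfolding adj_op_mult_op by simp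
qed

lemma proj_mult_stabilized:
  assumes P: "is_proj_onto L N P (code_space L N T)"
    and Y: "\<And>\<beta> \<alpha>. \<beta> \<notin> confs L N \<or> \<alpha> \<notin> confs L N \<Longrightarrow> Y \<beta> \<alpha> = 0"
    and T_rows: "\<And>B \<beta> \<alpha>. B \<in> T \<Longrightarrow> \<beta> \<notin> confs L N \<Longrightarrow> B \<beta> \<alpha> = 0"
    and BY: "\<And>B. B \<in> T \<Longrightarrow> mult_op L N B Y = Y"
  shows "mult_op L N P Y = Y"
proof (intro ext)
  fix \<beta> \<alpha>
  have "apply_op L N B (op_col Y \<alpha>) = op_col Y \<alpha>" if B: "B \<in> T" for B
  proof
    fix x
    show "apply_op L N B (op_col Y \<alpha>) x = op_col Y \<alpha> x"
    proof (cases "x \<in> confs L N \<and> \<alpha> \<in> confs L N")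
      case True
      have "mult_op L N B Y x \<alpha> = Y x \<alpha>" using BY[OF B] by simp
      then show ?thesis using True unfolding mult_op_def apply_op_def op_col_def by simp
    next
      case False
      then show ?thesis using T_rows[OF B] Y unfolding apply_op_def op_col_def by auto
    qed
  qed
  then have "op_col Y \<alpha> \<in> code_space L N T"
    using Y unfolding code_space_def op_col_def by auto
  then have "apply_op L N P (op_col Y \<alpha>) = op_col Y \<alpha>"
    using P unfolding is_proj_onto_def by blast
  then have "apply_op L N P (op_col Y \<alpha>) \<beta> = Y \<beta> \<alpha>"
    by (simp add: op_col_def)
  then show "mult_op L N P Y \<beta> \<alpha> = Y \<beta> \<alpha>"
    unfolding mult_op_def apply_op_def op_col_def using Y by auto
qed

lemma proj_sandwich_eq_0_if_phase_commute:
  assumes P: "is_proj_onto L N P (code_space L N T)" and A: "A \<in> T" "adj_op A \<in> T"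
    and EA: "mult_op L N E A = smult_op w (mult_op L N A E)" and w: "w \<noteq> 1"
  shows "mult_op L N (mult_op L N P E) P = (\<lambda>_ _. 0)"
proof -
  let ?X = "mult_op L N (mult_op L N P E) P"
  have "?X = mult_op L N (mult_op L N P E) (mult_op L N A P)"
    unfolding stab_mult_proj[OF P A(1)] ..
  also have "\<dots> = mult_op L N (mult_op L N P (mult_op L N E A)) P"
    by (simp only: mult_op_assoc)
  also have "\<dots> = smult_op w (mult_op L N (mult_op L N (mult_op L N P A) E) P)"
    unfolding EA mult_op_smult_op_left mult_op_smult_op_right by (simp only: mult_op_assoc)
  also have "\<dots> = smult_op w ?X"
    unfolding proj_mult_stab[OF P A(2)] ..
  finally have "?X = smult_op w ?X" .
  then have "?X x y = w * ?X x y" for x y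
    by (metis smult_op_def)
  then have "(1 - w) * ?X x y = 0" for x y
    by (simp add: algebra_simps)
  then show ?thesis using w by (simp add: fun_eq_iff)
qed

lemma proj_sandwich_commuting:
  assumes P: "is_proj_onto L N P (code_space L N T)" and TS: "T \<subseteq> S"
    and S: "S \<subseteq> torus_paulis L N"
    and comm: "\<And>B. B \<in> S \<Longrightarrow> mult_op L N B Gop = mult_op L N Gop B"
  shows "mult_op L N (mult_op L N P (smult_op c Gop)) P = smult_op c (mult_op L N Gop P)"
proof -
  let ?Y = "mult_op L N Gop P"
  have "mult_op L N P ?Y = ?Y"
  proof (rule proj_mult_stabilized[OF P])
    fix \<beta> \<alpha> assume "\<beta> \<notin> confs L N \<or> \<alpha> \<notin> confs L N"
    then show "?Y \<beta> \<alpha> = 0" unfolding mult_op_def by auto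
  next
    fix B \<beta> \<alpha> assume "B \<in> T" "\<beta> \<notin> confs L N"
    then show "B \<beta> \<alpha> = 0" using torus_paulis_outside TS S by blast
  next
    fix B assume B: "B \<in> T"
    then have BGop: "mult_op L N B Gop = mult_op L N Gop B" using TS by (intro comm) blast
    have "mult_op L N B ?Y = mult_op L N (mult_op L N B Gop) P" by (simp only: mult_op_assoc)
    also have "\<dots> = mult_op L N (mult_op L N Gop B) P" unfolding BGop ..
    also have "\<dots> = mult_op L N Gop (mult_op L N B P)" by (rule mult_op_assoc)
    also have "\<dots> = ?Y" using stab_mult_proj[OF P B] by simp
    finally show "mult_op L N B ?Y = ?Y" .
  qed
  then show ?thesis
    unfolding mult_op_smult_op_left mult_op_smult_op_right by (simp only: mult_op_assoc)
qed

lemma op_group_gen_least: "op_group L N S \<Longrightarrow> X \<subseteq> S \<Longrightarrow> op_group_gen L N X \<subseteq> S"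
  unfolding op_group_gen_def by blast

lemma adj_op_in_op_group_gen: "A \<in> op_group_gen L N X \<Longrightarrow> adj_op A \<in> op_group_gen L N X"
  unfolding op_group_gen_def op_group_def by blast

lemma op_group_gen_base: "X \<subseteq> op_group_gen L N X"
  unfolding op_group_gen_def by blast

subsection \<open>Periodic images of plane Paulis\<close>

definition torus_proj :: "nat \<Rightarrow> site \<Rightarrow> site" where
  "torus_proj L p = (fst p mod int L, snd p mod int L)"

definition site_add :: "site \<Rightarrow> site \<Rightarrow> site" where
  "site_add p k = (fst p + fst k, snd p + snd k)"

lemma torus_proj_in_torus_sites: "L > 0 \<Longrightarrow> torus_proj L p \<in> torus_sites L"
  unfolding torus_proj_def torus_sites_def by auto

lemma wrap_tvecs: "N > 0 \<Longrightarrow> wrap L N f \<in> tvecs L N"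
  unfolding wrap_def tvecs_def by auto

lemma wrap_eq_fiber_sum:
  assumes t: "t \<in> torus_sites L" and F: "finite F" and supp: "{p. f p \<noteq> 0} \<subseteq> F"
  shows "wrap L N f t = (\<Sum>p\<in>{p\<in>F. torus_proj L p = t}. f p) mod int N"
proof -
  have "(\<Sum>p\<in>{p. f p \<noteq> 0 \<and> (fst p mod int L, snd p mod int L) = t}. f p)
      = (\<Sum>p\<in>{p\<in>F. torus_proj L p = t}. f p)"
    by (rule sum.mono_neutral_left) (use F supp in \<open>auto simp: torus_proj_def\<close>)
  then show ?thesis using t unfolding wrap_def by simp
qed

lemma torus_dot_wrap_left_mod:
  assumes L: "L > 0" and F: "finite F" and supp: "{p. f p \<noteq> 0} \<subseteq> F"
  shows "torus_dot L (wrap L N f) h mod int N = (\<Sum>p\<in>F. f p * h (torus_proj L p)) mod int N"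
proof -
  have "torus_dot L (wrap L N f) h mod int N =
      (\<Sum>t\<in>torus_sites L. (\<Sum>p\<in>{p\<in>F. torus_proj L p = t}. f p) * h t) mod int N"
    unfolding torus_dot_def
    by (intro sum_mod_cong) (simp add: wrap_eq_fiber_sum[OF _ F supp] mod_mult_left_eq)
  also have "(\<Sum>t\<in>torus_sites L. (\<Sum>p\<in>{p\<in>F. torus_proj L p = t}. f p) * h t)
      = (\<Sum>t\<in>torus_sites L. \<Sum>p\<in>{p\<in>F. torus_proj L p = t}. f p * h (torus_proj L p))"
    by (rule sum.cong) (auto simp: sum_distrib_right)
  also have "\<dots> = (\<Sum>p\<in>F. f p * h (torus_proj L p))"
    by (rule sum.group) (use F finite_torus_sites torus_proj_in_torus_sites[OF L] in auto)
  finally show ?thesis .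
qed

lemma torus_dot_wrap_right_mod:
  assumes "L > 0" and "finite F" and "{p. f p \<noteq> 0} \<subseteq> F"
  shows "torus_dot L h (wrap L N f) mod int N = (\<Sum>p\<in>F. f p * h (torus_proj L p)) mod int N"
  using torus_dot_wrap_left_mod[OF assms] by (simp add: torus_dot_commute)

lemma torus_dot_wrap_wrap_mod:
  assumes L: "L > 0" and F: "finite F" "finite F'"
    and supp: "{p. f p \<noteq> 0} \<subseteq> F" "{p. f' p \<noteq> 0} \<subseteq> F'"
  shows "torus_dot L (wrap L N f) (wrap L N f') mod int N
       = (\<Sum>p\<in>F. f p * (\<Sum>q\<in>{q\<in>F'. torus_proj L q = torus_proj L p}. f' q)) mod int N"
proof -
  have "wrap L N f' (torus_proj L p) = (\<Sum>q\<in>{q\<in>F'. torus_proj L q = torus_proj L p}. f' q) mod int N" for p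
    by (rule wrap_eq_fiber_sum[OF torus_proj_in_torus_sites[OF L] F(2) supp(2)])
  then show ?thesis
    unfolding torus_dot_wrap_left_mod[OF L F(1) supp(1)]
    by (intro sum_mod_cong) (metis mod_mult_right_eq)
qed

definition symp_sum :: "(pvec \<times> pvec) \<Rightarrow> (pvec \<times> pvec) \<Rightarrow> site set \<Rightarrow> int" where
  "symp_sum v w F = (\<Sum>p\<in>F. snd v p * fst w p - snd w p * fst v p)"

lemma pcomm_iff_symp_sum:
  assumes F: "finite F" and sub: "psupp v \<union> psupp w \<subseteq> F"
  shows "pcomm N v w \<longleftrightarrow> int N dvd symp_sum v w F"
proof -
  have "symp_sum v w (psupp v \<union> psupp w) = symp_sum v w F"
    unfolding symp_sum_def by (rule sum.mono_neutral_left[OF F sub]) (auto simp: psupp_def)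
  then show ?thesis unfolding pcomm_def symp_sum_def by (simp add: mod_eq_0_iff_dvd)
qed

lemma symp_sum_psupp_left:
  assumes F: "finite F" and sub: "psupp v \<subseteq> F"
  shows "symp_sum v w F = (\<Sum>p\<in>psupp v. snd v p * fst w p - snd w p * fst v p)"
  unfolding symp_sum_def by (rule sum.mono_neutral_right[OF F sub]) (auto simp: psupp_def)

lemma pcomm_commute:
  assumes "finite (psupp v)" "finite (psupp w)"
  shows "pcomm N v w \<longleftrightarrow> pcomm N w v"
proof -
  have F: "finite (psupp v \<union> psupp w)" using assms by blast
  have "symp_sum w v (psupp v \<union> psupp w) = - symp_sum v w (psupp v \<union> psupp w)"
    unfolding symp_sum_def sum_negf[symmetric] by (rule sum.cong) auto
  then show ?thesis
    using pcomm_iff_symp_sum[OF F, of v w N] pcomm_iff_symp_sum[OF F, of w v N]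
    by (simp add: Un_commute)
qed

lemma finite_psupp_pvecs: "v \<in> pvecs N \<Longrightarrow> finite (psupp v)"
  unfolding pvecs_def by simp

lemma psupp_padd: "psupp (padd N v w) \<subseteq> psupp v \<union> psupp w"
  unfolding psupp_def padd_def by auto

lemma psupp_pneg: "psupp (pneg N v) \<subseteq> psupp v"
  unfolding psupp_def pneg_def by auto

lemma padd_pvecs: "N > 0 \<Longrightarrow> v \<in> pvecs N \<Longrightarrow> w \<in> pvecs N \<Longrightarrow> padd N v w \<in> pvecs N"
  unfolding pvecs_def using psupp_padd[of N v w] finite_subset by (auto simp: padd_def)

lemma pneg_pvecs: "N > 0 \<Longrightarrow> v \<in> pvecs N \<Longrightarrow> pneg N v \<in> pvecs N"
  unfolding pvecs_def using psupp_pneg[of N v] finite_subset by (auto simp: pneg_def)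

lemma mod_mult_diff_eq: "(a mod n * b - c * (d mod n)) mod n = (a * b - c * d) mod (n::int)"
proof -
  have "(a mod n * b - c * (d mod n)) mod n = ((a mod n * b) mod n - (c * (d mod n)) mod n) mod n"
    by (simp add: mod_diff_eq)
  also have "\<dots> = (a * b - c * d) mod n"
    by (simp add: mod_mult_left_eq mod_mult_right_eq mod_diff_eq)
  finally show ?thesis .
qed

lemma symp_sum_padd_mod:
  "symp_sum (padd N v w) e F mod int N = (symp_sum v e F + symp_sum w e F) mod int N"
  unfolding symp_sum_def sum.distrib[symmetric]
  by (intro sum_mod_cong)
     (simp only: padd_def fst_conv snd_conv mod_mult_diff_eq, simp add: algebra_simps)

lemma symp_sum_pneg_mod:
  "symp_sum (pneg N v) e F mod int N = (- symp_sum v e F) mod int N"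
  unfolding symp_sum_def sum_negf[symmetric]
  by (intro sum_mod_cong)
     (simp only: pneg_def fst_conv snd_conv mod_mult_diff_eq, simp add: algebra_simps)

lemma plane_subgroup_commutant:
  assumes N: "N > 0" and e: "e \<in> pvecs N"
  shows "plane_subgroup N {v\<in>pvecs N. pcomm N v e}"
  unfolding plane_subgroup_def
proof (intro conjI ballI)
  show "pzero \<in> {v \<in> pvecs N. pcomm N v e}"
    using N unfolding pvecs_def pzero_def psupp_def pcomm_def by simp
next
  fix v w assume v: "v \<in> {v \<in> pvecs N. pcomm N v e}" and w: "w \<in> {v \<in> pvecs N. pcomm N v e}"
  define F where "F = psupp v \<union> psupp w \<union> psupp e"
  have F: "finite F" unfolding F_def using v w e by (auto intro: finite_psupp_pvecs)
  have "int N dvd symp_sum v e F" "int N dvd symp_sum w e F"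
    using v w pcomm_iff_symp_sum[OF F] unfolding F_def by blast+
  then have "int N dvd symp_sum v e F + symp_sum w e F" by (rule dvd_add)
  then have "int N dvd symp_sum (padd N v w) e F"
    by (simp only: dvd_eq_mod_eq_0 symp_sum_padd_mod)
  moreover have "psupp (padd N v w) \<union> psupp e \<subseteq> F" using psupp_padd[of N v w] unfolding F_def by blast
  ultimately show "padd N v w \<in> {v \<in> pvecs N. pcomm N v e}"
    using pcomm_iff_symp_sum[OF F] padd_pvecs[OF N] v w by blast
next
  fix v assume v: "v \<in> {v \<in> pvecs N. pcomm N v e}"
  define F where "F = psupp v \<union> psupp e"
  have F: "finite F" unfolding F_def using v e by (auto intro: finite_psupp_pvecs)
  have "int N dvd symp_sum v e F" using v pcomm_iff_symp_sum[OF F] unfolding F_def by blast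
  then have "int N dvd - symp_sum v e F" by simp
  then have "int N dvd symp_sum (pneg N v) e F"
    by (simp only: dvd_eq_mod_eq_0 symp_sum_pneg_mod)
  moreover have "psupp (pneg N v) \<union> psupp e \<subseteq> F" using psupp_pneg[of N v] unfolding F_def by blast
  ultimately show "pneg N v \<in> {v \<in> pvecs N. pcomm N v e}"
    using pcomm_iff_symp_sum[OF F] pneg_pvecs[OF N] v by blast
qed auto

lemma plane_span_least: "plane_subgroup N H \<Longrightarrow> X \<subseteq> H \<Longrightarrow> plane_span N X \<subseteq> H"
  unfolding plane_span_def by blast

lemma finite_psupp_pshift:
  assumes "finite (psupp g)" shows "finite (psupp (pshift u g))"
proof -
  have "psupp (pshift u g) \<subseteq> (\<lambda>q. (fst q + fst u, snd q + snd u)) ` psupp g"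
  proof
    fix p assume "p \<in> psupp (pshift u g)"
    then have "(fst p - fst u, snd p - snd u) \<in> psupp g" unfolding psupp_def pshift_def by simp
    then show "p \<in> (\<lambda>q. (fst q + fst u, snd q + snd u)) ` psupp g" by force
  qed
  then show ?thesis using assms finite_surj by blast
qed

text \<open>The translation vectors K between the two supports let every fiber of the torus
  projection above p be enumerated as p + K.\<close>

lemma fiber_sum_reindex:
  assumes p: "p \<in> Sx" and fin: "finite K"
    and K: "K = (\<lambda>(p, q). (fst q - fst p, snd q - snd p)) `
               {(p, q). p \<in> Sx \<and> q \<in> Sy \<and> torus_proj L p = torus_proj L q}"
    and X: "\<And>q. q \<notin> Sy \<Longrightarrow> X q = 0"
  shows "(\<Sum>q\<in>{q\<in>Sy. torus_proj L q = torus_proj L p}. X q) = (\<Sum>k\<in>K. X (site_add p k))"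
proof -
  have inj: "inj_on (site_add p) {k\<in>K. site_add p k \<in> Sy}"
    unfolding inj_on_def site_add_def by auto
  have img: "site_add p ` {k\<in>K. site_add p k \<in> Sy} = {q\<in>Sy. torus_proj L q = torus_proj L p}"
  proof (intro equalityI subsetI)
    fix q assume "q \<in> site_add p ` {k\<in>K. site_add p k \<in> Sy}"
    then obtain k where k: "k \<in> K" "site_add p k \<in> Sy" "q = site_add p k" by blast
    from k(1) obtain p' q' where pq: "torus_proj L p' = torus_proj L q'"
      "k = (fst q' - fst p', snd q' - snd p')" unfolding K by auto
    then have "int L dvd fst k" "int L dvd snd k"
      unfolding torus_proj_def by (simp_all add: mod_eq_dvd_iff dvd_diff_commute)
    then have "torus_proj L q = torus_proj L p"
      unfolding k(3) torus_proj_def site_add_def by (simp add: mod_add_right_eq[symmetric])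
    then show "q \<in> {q\<in>Sy. torus_proj L q = torus_proj L p}" using k by simp
  next
    fix q assume q: "q \<in> {q\<in>Sy. torus_proj L q = torus_proj L p}"
    let ?k = "(fst q - fst p, snd q - snd p)"
    have "?k \<in> K" unfolding K using p q by (auto intro!: image_eqI[of _ _ "(p, q)"])
    moreover have "site_add p ?k = q" unfolding site_add_def by simp
    ultimately show "q \<in> site_add p ` {k\<in>K. site_add p k \<in> Sy}" using q by force
  qed
  have "(\<Sum>k\<in>K. X (site_add p k)) = (\<Sum>k\<in>{k\<in>K. site_add p k \<in> Sy}. X (site_add p k))"
    by (rule sum.mono_neutral_right) (use fin X in auto)
  also have "\<dots> = (\<Sum>q\<in>site_add p ` {k\<in>K. site_add p k \<in> Sy}. X q)"
    by (rule sum.reindex[OF inj, symmetric, unfolded comp_def])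
  finally show ?thesis unfolding img by simp
qed

lemma pcomm_pshift_dvd:
  assumes fs: "finite (psupp s)" and fg: "finite (psupp g)"
    and comm: "pcomm N s (pshift (- fst k, - snd k) g)"
  shows "int N dvd (\<Sum>p\<in>psupp s. snd s p * fst g (site_add p k) - snd g (site_add p k) * fst s p)"
proof -
  define h where "h = pshift (- fst k, - snd k) g"
  have F: "finite (psupp s \<union> psupp h)" unfolding h_def using fs finite_psupp_pshift[OF fg] by simp
  have "int N dvd symp_sum s h (psupp s \<union> psupp h)"
    using comm pcomm_iff_symp_sum[OF F] unfolding h_def by blast
  moreover have "fst h p = fst g (site_add p k)" "snd h p = snd g (site_add p k)" for p
    unfolding h_def pshift_def site_add_def by simp_all
  ultimately show ?thesis by (simp add: symp_sum_psupp_left[OF F])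
qed

text \<open>If s commutes with every translate of g on the plane, their periodic images commute on
  the torus: the torus commutator is a sum of plane commutators with translates of g by
  multiples of L.\<close>

lemma wrap_symp_dvd:
  assumes L: "L > 0" and fs: "finite (psupp s)" and fg: "finite (psupp g)"
    and comm: "\<And>u. pcomm N s (pshift u g)"
  shows "int N dvd torus_dot L (wrap L N (snd s)) (wrap L N (fst g))
                   - torus_dot L (wrap L N (snd g)) (wrap L N (fst s))"
proof -
  define Ss where "Ss = psupp s"
  define Sg where "Sg = psupp g"
  define K where "K = (\<lambda>(p, q). (fst q - fst p, snd q - snd p)) `
                        {(p, q). p \<in> Ss \<and> q \<in> Sg \<and> torus_proj L p = torus_proj L q}"
  define fib where "fib p = {q\<in>Sg. torus_proj L q = torus_proj L p}" for p
  have fSs: "finite Ss" and fSg: "finite Sg" using fs fg unfolding Ss_def Sg_def by auto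
  have fK: "finite K" unfolding K_def
    by (rule finite_imageI, rule finite_subset[of _ "Ss \<times> Sg"]) (use fSs fSg in auto)
  have supp_s: "{p. fst s p \<noteq> 0} \<subseteq> Ss" "{p. snd s p \<noteq> 0} \<subseteq> Ss"
    and supp_g: "{p. fst g p \<noteq> 0} \<subseteq> Sg" "{p. snd g p \<noteq> 0} \<subseteq> Sg"
    unfolding Ss_def Sg_def psupp_def by auto
  have fiber: "(\<Sum>q\<in>fib p. X q) = (\<Sum>k\<in>K. X (site_add p k))"
    if "p \<in> Ss" "\<And>q. q \<notin> Sg \<Longrightarrow> X q = 0" for p X
    unfolding fib_def by (rule fiber_sum_reindex[OF that(1) fK K_def that(2)])
  have "torus_dot L (wrap L N (snd g)) (wrap L N (fst s))
      = torus_dot L (wrap L N (fst s)) (wrap L N (snd g))" by (rule torus_dot_commute)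
  then have "(torus_dot L (wrap L N (snd s)) (wrap L N (fst g))
          - torus_dot L (wrap L N (snd g)) (wrap L N (fst s))) mod int N
      = (torus_dot L (wrap L N (snd s)) (wrap L N (fst g)) mod int N
          - torus_dot L (wrap L N (fst s)) (wrap L N (snd g)) mod int N) mod int N"
    by (simp add: mod_diff_eq)
  also have "\<dots> = ((\<Sum>p\<in>Ss. snd s p * (\<Sum>q\<in>fib p. fst g q)) mod int N
                    - (\<Sum>p\<in>Ss. fst s p * (\<Sum>q\<in>fib p. snd g q)) mod int N) mod int N"
    unfolding fib_def torus_dot_wrap_wrap_mod[OF L fSs fSg supp_s(2) supp_g(1)]
      torus_dot_wrap_wrap_mod[OF L fSs fSg supp_s(1) supp_g(2)] ..
  also have "\<dots> = ((\<Sum>p\<in>Ss. snd s p * (\<Sum>q\<in>fib p. fst g q))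
                    - (\<Sum>p\<in>Ss. fst s p * (\<Sum>q\<in>fib p. snd g q))) mod int N"
    by (rule mod_diff_eq)
  also have "(\<Sum>p\<in>Ss. snd s p * (\<Sum>q\<in>fib p. fst g q)) - (\<Sum>p\<in>Ss. fst s p * (\<Sum>q\<in>fib p. snd g q))
      = (\<Sum>p\<in>Ss. \<Sum>k\<in>K. snd s p * fst g (site_add p k) - snd g (site_add p k) * fst s p)"
  proof -
    have "fst g q = 0" "snd g q = 0" if "q \<notin> Sg" for q
      using that unfolding Sg_def psupp_def by auto
    then have "snd s p * (\<Sum>q\<in>fib p. fst g q) - fst s p * (\<Sum>q\<in>fib p. snd g q)
        = (\<Sum>k\<in>K. snd s p * fst g (site_add p k) - snd g (site_add p k) * fst s p)" if "p \<in> Ss" for p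
      using fiber[OF that, of "fst g"] fiber[OF that, of "snd g"]
      by (simp add: sum_distrib_left sum_subtractf mult.commute)
    then show ?thesis by (simp add: sum_subtractf[symmetric])
  qed
  also have "\<dots> = (\<Sum>k\<in>K. \<Sum>p\<in>Ss. snd s p * fst g (site_add p k) - snd g (site_add p k) * fst s p)"
    by (rule sum.swap)
  finally have reduced: "(torus_dot L (wrap L N (snd s)) (wrap L N (fst g))
          - torus_dot L (wrap L N (snd g)) (wrap L N (fst s))) mod int N
      = (\<Sum>k\<in>K. \<Sum>p\<in>Ss. snd s p * fst g (site_add p k) - snd g (site_add p k) * fst s p) mod int N" .
  have "int N dvd (\<Sum>k\<in>K. \<Sum>p\<in>Ss. snd s p * fst g (site_add p k) - snd g (site_add p k) * fst s p)"
    unfolding Ss_def by (intro dvd_sum pcomm_pshift_dvd[OF fs fg comm])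
  then show ?thesis unfolding dvd_eq_mod_eq_0 reduced .
qed

subsection \<open>Lifting a pair of small errors to the plane\<close>

definition in_box :: "int \<Rightarrow> int \<Rightarrow> int \<Rightarrow> site \<Rightarrow> bool" where
  "in_box x y d p \<longleftrightarrow> x \<le> fst p \<and> fst p < x + d \<and> y \<le> snd p \<and> snd p < y + d"

definition near :: "int \<Rightarrow> site \<Rightarrow> site \<Rightarrow> bool" where
  "near m p q \<longleftrightarrow> \<bar>fst p - fst q\<bar> \<le> m \<and> \<bar>snd p - snd q\<bar> \<le> m"

text \<open>The box of side d' at (x', y') is placed relative to the box of side d at (x, y) so that
  among all its translates by L Z^2 only the box itself comes within distance m of it.\<close>

definition boxes_apart :: "int \<Rightarrow> int \<Rightarrow> int \<Rightarrow> int \<Rightarrow> int \<Rightarrow> int \<Rightarrow> int \<Rightarrow> int \<Rightarrow> bool" where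
  "boxes_apart m L x y d x' y' d' \<longleftrightarrow> -(m+d') \<le> x' - x \<and> x' - x < L - (m+d') \<and>
      -(m+d') \<le> y' - y \<and> y' - y < L - (m+d') \<and> d + d' + 2*m \<le> L \<and> 0 \<le> L"

definition torus_box :: "nat \<Rightarrow> int \<Rightarrow> int \<Rightarrow> nat \<Rightarrow> site set" where
  "torus_box L x0 y0 d = {((x0 + i) mod int L, (y0 + j) mod int L) | i j.
                           0 \<le> i \<and> i < int d \<and> 0 \<le> j \<and> j < int d}"

lemma periodic_offset_eq_0:
  fixes A B u v k L dA dB m :: int
  assumes "A \<le> u" "u < A + dA" "B + k*L \<le> v" "v < B + k*L + dB" "\<bar>u - v\<bar> \<le> m"
    "-(m+dB) \<le> B - A" "B - A < L - (m+dB)" "dA + dB + 2*m \<le> L" "0 \<le> L"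
  shows "k = 0"
proof (rule ccontr)
  assume "k \<noteq> 0"
  then have "k \<ge> 1 \<or> k \<le> -1" by linarith
  then show False
  proof
    assume "k \<ge> 1"
    then have "k * L \<ge> 1 * L" using assms(9) by (intro mult_right_mono) auto
    then show False using assms by linarith
  next
    assume "k \<le> -1"
    then have "k * L \<le> (-1) * L" using assms(9) by (intro mult_right_mono) auto
    then show False using assms by linarith
  qed
qed

lemma boxes_apart_near_image:
  assumes c: "boxes_apart m L x y d x' y' d'" and q: "in_box x y d q"
    and p: "in_box (x' + kx * L) (y' + ky * L) d' p" and n: "near m q p"
  shows "kx = 0 \<and> ky = 0"
proof
  show "kx = 0"
    by (rule periodic_offset_eq_0[of x "fst q" d x' kx L "fst p" d' m])
       (use c q p n in \<open>auto simp: boxes_apart_def in_box_def near_def\<close>)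
  show "ky = 0"
    by (rule periodic_offset_eq_0[of y "snd q" d y' ky L "snd p" d' m])
       (use c q p n in \<open>auto simp: boxes_apart_def in_box_def near_def\<close>)
qed

lemma boxes_apart_near_image':
  assumes c: "boxes_apart m L x y d x' y' d'" and q: "in_box x' y' d' q"
    and p: "in_box (x + kx * L) (y + ky * L) d p" and n: "near m q p"
  shows "kx = 0 \<and> ky = 0"
proof -
  let ?p = "(fst p - kx * L, snd p - ky * L)" and ?q = "(fst q - kx * L, snd q - ky * L)"
  have "in_box x y d ?p" using p unfolding in_box_def by auto
  moreover have "in_box (x' + (- kx) * L) (y' + (- ky) * L) d' ?q" using q unfolding in_box_def by auto
  moreover have "near m ?p ?q" using n unfolding near_def by auto
  ultimately show ?thesis using boxes_apart_near_image[OF c] by fastforce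
qed

lemma torus_box_preimage:
  assumes "torus_proj L p \<in> torus_box L x0 y0 d"
  obtains kx ky where "in_box (x0 + kx * int L) (y0 + ky * int L) (int d) p"
proof -
  obtain i j where ij: "0 \<le> i" "i < int d" "0 \<le> j" "j < int d"
    "(x0 + i) mod int L = fst p mod int L" "(y0 + j) mod int L = snd p mod int L"
    using assms unfolding torus_box_def torus_proj_def by auto
  obtain kx where "fst p - (x0 + i) = int L * kx"
    using ij(5) by (metis mod_eq_dvd_iff dvdE)
  moreover obtain ky where "snd p - (y0 + j) = int L * ky"
    using ij(6) by (metis mod_eq_dvd_iff dvdE)
  ultimately have "in_box (x0 + kx * int L) (y0 + ky * int L) (int d) p"
    unfolding in_box_def using ij by (simp add: algebra_simps)
  then show ?thesis by (rule that)
qed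

lemma torus_box_lift:
  assumes "t \<in> torus_box L x0 y0 d"
  obtains p where "in_box x0 y0 (int d) p" "torus_proj L p = t"
proof -
  obtain i j where "0 \<le> i" "i < int d" "0 \<le> j" "j < int d"
    "t = ((x0 + i) mod int L, (y0 + j) mod int L)"
    using assms unfolding torus_box_def by auto
  then have "in_box x0 y0 (int d) (x0 + i, y0 + j)" "torus_proj L (x0 + i, y0 + j) = t"
    unfolding in_box_def torus_proj_def by simp_all
  then show ?thesis by (rule that)
qed

lemma torus_proj_in_box:
  assumes "in_box x0 y0 (int d) p"
  shows "torus_proj L p \<in> torus_box L x0 y0 d"
proof -
  have "0 \<le> fst p - x0 \<and> fst p - x0 < int d \<and> 0 \<le> snd p - y0 \<and> snd p - y0 < int d"
    using assms unfolding in_box_def by auto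
  moreover have "torus_proj L p = ((x0 + (fst p - x0)) mod int L, (y0 + (snd p - y0)) mod int L)"
    unfolding torus_proj_def by simp
  ultimately show ?thesis unfolding torus_box_def by blast
qed

lemma torus_box_mod_cong:
  assumes "x0 mod int L = x0' mod int L" "y0 mod int L = y0' mod int L"
  shows "torus_box L x0 y0 d = torus_box L x0' y0' d"
proof -
  have "(x0 + i) mod int L = (x0' + i) mod int L" "(y0 + i) mod int L = (y0' + i) mod int L" for i
    using assms by (metis mod_add_left_eq)+
  then show ?thesis unfolding torus_box_def by simp
qed

text \<open>The lift agrees with (a1, b1) on box 1 and with the inverse of (a2, b2) on box 2, so its
  periodic image is the product of the first Pauli with the inverse of the second.\<close>

locale error_pair_lift =
  fixes L N lS :: nat and x1 y1 x2 y2 :: int and d1 d2 :: nat and a1 b1 a2 b2 :: pvec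
  assumes N: "N > 0" and L: "L > 0"
    and small1: "2 * (int d1 + int lS) < int L" and small2: "2 * (int d2 + int lS) < int L"
    and apart: "boxes_apart (int lS) (int L) x1 y1 (int d1) x2 y2 (int d2)"
    and tvecs1: "a1 \<in> tvecs L N" "b1 \<in> tvecs L N" and tvecs2: "a2 \<in> tvecs L N" "b2 \<in> tvecs L N"
    and supp1: "tsupp a1 b1 \<subseteq> torus_box L x1 y1 d1"
    and supp2: "tsupp a2 b2 \<subseteq> torus_box L x2 y2 d2"
begin

definition in_box1 :: "site \<Rightarrow> bool" where "in_box1 p = in_box x1 y1 (int d1) p"
definition in_box2 :: "site \<Rightarrow> bool" where "in_box2 p = in_box x2 y2 (int d2) p"

definition lift_a :: pvec where
  "lift_a p = ((if in_box1 p then a1 (torus_proj L p) else 0)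
              - (if in_box2 p then a2 (torus_proj L p) else 0)) mod int N"

definition lift_b :: pvec where
  "lift_b p = ((if in_box1 p then b1 (torus_proj L p) else 0)
              - (if in_box2 p then b2 (torus_proj L p) else 0)) mod int N"

definition lift_region :: "site set" where "lift_region = {p. in_box1 p \<or> in_box2 p}"

lemma periodic_image_box1:
  assumes q: "in_box1 q \<or> in_box2 q" and p: "in_box (x1 + kx * int L) (y1 + ky * int L) (int d1) p"
    and n: "near (int lS) q p"
  shows "kx = 0 \<and> ky = 0"
proof -
  have self: "boxes_apart (int lS) (int L) x1 y1 (int d1) x1 y1 (int d1)"
    unfolding boxes_apart_def using small1 by simp
  show ?thesis
    using q boxes_apart_near_image[OF self _ p n] boxes_apart_near_image'[OF apart _ p n]
    unfolding in_box1_def in_box2_def by blast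
qed

lemma periodic_image_box2:
  assumes q: "in_box1 q \<or> in_box2 q" and p: "in_box (x2 + kx * int L) (y2 + ky * int L) (int d2) p"
    and n: "near (int lS) q p"
  shows "kx = 0 \<and> ky = 0"
proof -
  have self: "boxes_apart (int lS) (int L) x2 y2 (int d2) x2 y2 (int d2)"
    unfolding boxes_apart_def using small2 by simp
  show ?thesis
    using q boxes_apart_near_image[OF apart _ p n] boxes_apart_near_image[OF self _ p n]
    unfolding in_box1_def in_box2_def by blast
qed

lemma near_image_box1:
  assumes "in_box1 q \<or> in_box2 q" "near (int lS) q p" "torus_proj L p \<in> torus_box L x1 y1 d1"
  shows "in_box1 p"
proof -
  obtain kx ky where k: "in_box (x1 + kx * int L) (y1 + ky * int L) (int d1) p"
    using torus_box_preimage[OF assms(3)] .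
  then show ?thesis using periodic_image_box1[OF assms(1) k assms(2)] unfolding in_box1_def by simp
qed

lemma near_image_box2:
  assumes "in_box1 q \<or> in_box2 q" "near (int lS) q p" "torus_proj L p \<in> torus_box L x2 y2 d2"
  shows "in_box2 p"
proof -
  obtain kx ky where k: "in_box (x2 + kx * int L) (y2 + ky * int L) (int d2) p"
    using torus_box_preimage[OF assms(3)] .
  then show ?thesis using periodic_image_box2[OF assms(1) k assms(2)] unfolding in_box2_def by simp
qed

lemma torus_proj_inj_on_lift_region:
  assumes p: "in_box1 p \<or> in_box2 p" and p': "in_box1 p' \<or> in_box2 p'"
    and t: "torus_proj L p = torus_proj L p'"
  shows "p = p'"
proof -
  have "int L dvd fst p' - fst p" using t unfolding torus_proj_def by (simp add: mod_eq_dvd_iff dvd_diff_commute)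
  then obtain kx where kx: "fst p' - fst p = int L * kx" by (auto elim: dvdE)
  have "int L dvd snd p' - snd p" using t unfolding torus_proj_def by (simp add: mod_eq_dvd_iff dvd_diff_commute)
  then obtain ky where ky: "snd p' - snd p = int L * ky" by (auto elim: dvdE)
  have n: "near (int lS) p' p'" unfolding near_def by simp
  have "kx = 0 \<and> ky = 0"
    using p
  proof
    assume "in_box1 p"
    then have "in_box (x1 + kx * int L) (y1 + ky * int L) (int d1) p'"
      using kx ky unfolding in_box1_def in_box_def by (simp add: algebra_simps)
    then show ?thesis using periodic_image_box1[OF p' _ n] by blast
  next
    assume "in_box2 p"
    then have "in_box (x2 + kx * int L) (y2 + ky * int L) (int d2) p'"
      using kx ky unfolding in_box2_def in_box_def by (simp add: algebra_simps)
    then show ?thesis using periodic_image_box2[OF p' _ n] by blast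
  qed
  then show ?thesis using kx ky by (simp add: prod_eq_iff)
qed

lemma finite_lift_region: "finite lift_region"
proof -
  have "lift_region \<subseteq> ({x1..<x1 + int d1} \<times> {y1..<y1 + int d1}) \<union> ({x2..<x2 + int d2} \<times> {y2..<y2 + int d2})"
    unfolding lift_region_def in_box1_def in_box2_def in_box_def by auto
  then show ?thesis by (rule finite_subset) simp
qed

lemma psupp_lift: "psupp (lift_a, lift_b) \<subseteq> lift_region"
  unfolding psupp_def lift_region_def lift_a_def lift_b_def by auto

lemma lift_pvecs: "(lift_a, lift_b) \<in> pvecs N"
  unfolding pvecs_def using finite_subset[OF psupp_lift finite_lift_region] N
  by (simp add: lift_a_def lift_b_def)

lemma lift_outside: "\<not> (in_box1 p \<or> in_box2 p) \<Longrightarrow> lift_a p = 0 \<and> lift_b p = 0"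
  unfolding lift_a_def lift_b_def by simp

lemma lift_near:
  assumes "in_box1 q \<or> in_box2 q" and "near (int lS) q p"
  shows "lift_a p = vec_add N a1 (vec_neg N a2) (torus_proj L p)
       \<and> lift_b p = vec_add N b1 (vec_neg N b2) (torus_proj L p)"
proof -
  have "a1 (torus_proj L p) = 0 \<and> b1 (torus_proj L p) = 0" if "\<not> in_box1 p"
    using near_image_box1[OF assms] that supp1 unfolding tsupp_def by blast
  moreover have "a2 (torus_proj L p) = 0 \<and> b2 (torus_proj L p) = 0" if "\<not> in_box2 p"
    using near_image_box2[OF assms] that supp2 unfolding tsupp_def by blast
  ultimately show ?thesis unfolding lift_a_def lift_b_def vec_add_vec_neg by auto
qed

lemma lift_coords_in_region:
  assumes p: "in_box1 p \<or> in_box2 p"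
  shows "lift_a p = vec_add N a1 (vec_neg N a2) (torus_proj L p)
       \<and> lift_b p = vec_add N b1 (vec_neg N b2) (torus_proj L p)"
  using lift_near[OF p] by (simp add: near_def)

lemma torus_supp_lift:
  assumes t: "t \<in> torus_sites L"
    and nz: "a1 t \<noteq> 0 \<or> b1 t \<noteq> 0 \<or> a2 t \<noteq> 0 \<or> b2 t \<noteq> 0"
  obtains p where "in_box1 p \<or> in_box2 p" "torus_proj L p = t"
proof -
  have "t \<in> torus_box L x1 y1 d1 \<or> t \<in> torus_box L x2 y2 d2"
    using nz supp1 supp2 unfolding tsupp_def by blast
  then show ?thesis
    using torus_box_lift that unfolding in_box1_def in_box2_def by metis
qed

lemma wrap_lift:
  "wrap L N lift_a = vec_add N a1 (vec_neg N a2) \<and> wrap L N lift_b = vec_add N b1 (vec_neg N b2)"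
proof -
  have supp: "{p. lift_a p \<noteq> 0} \<subseteq> lift_region" "{p. lift_b p \<noteq> 0} \<subseteq> lift_region"
    using psupp_lift unfolding psupp_def by auto
  have "wrap L N lift_a t = vec_add N a1 (vec_neg N a2) t
      \<and> wrap L N lift_b t = vec_add N b1 (vec_neg N b2) t" for t
  proof (cases "t \<in> torus_sites L")
    case t: True
    note fibers = wrap_eq_fiber_sum[OF t finite_lift_region supp(1)]
      wrap_eq_fiber_sum[OF t finite_lift_region supp(2)]
    show ?thesis
    proof (cases "\<exists>p\<in>lift_region. torus_proj L p = t")
      case True
      then obtain p where p: "in_box1 p \<or> in_box2 p" "torus_proj L p = t"
        unfolding lift_region_def by blast
      have "{p'\<in>lift_region. torus_proj L p' = t} = {p}"
      proof (intro equalityI subsetI)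
        fix p' assume "p' \<in> {p'\<in>lift_region. torus_proj L p' = t}"
        then show "p' \<in> {p}"
          using torus_proj_inj_on_lift_region[OF _ p(1)] p(2) unfolding lift_region_def by auto
      qed (use p in \<open>auto simp: lift_region_def\<close>)
      then show ?thesis
        using lift_coords_in_region[OF p(1)] p(2) unfolding fibers by (simp add: vec_add_def vec_neg_def)
    next
      case False
      then have "a1 t = 0 \<and> b1 t = 0 \<and> a2 t = 0 \<and> b2 t = 0"
        using torus_supp_lift[OF t] unfolding lift_region_def by blast
      moreover have empty: "{p\<in>lift_region. torus_proj L p = t} = {}" using False by auto
      ultimately show ?thesis unfolding fibers empty vec_add_vec_neg by simp
    qed
  next
    case False
    then have "a1 t = 0" "a2 t = 0" "b1 t = 0" "b2 t = 0"
      using tvecs_outside tvecs1 tvecs2 by blast+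
    with False show ?thesis unfolding wrap_def vec_add_vec_neg by simp
  qed
  then show ?thesis by (simp add: fun_eq_iff)
qed

text \<open>A plane Pauli of size below lS either stays away from both boxes or lies entirely
  within distance lS of one of them; there the lift looks exactly like the torus error.\<close>

lemma lift_pcomm_local:
  assumes s: "s \<in> pvecs N" and local: "plane_linsize_lt (psupp s) (real lS)"
    and dvd: "int N dvd torus_dot L (vec_add N b1 (vec_neg N b2)) (wrap L N (fst s))
                        - torus_dot L (wrap L N (snd s)) (vec_add N a1 (vec_neg N a2))"
  shows "pcomm N s (lift_a, lift_b)"
proof -
  define a where "a = vec_add N a1 (vec_neg N a2)"
  define b where "b = vec_add N b1 (vec_neg N b2)"
  define Ss where "Ss = psupp s"
  have fSs: "finite Ss" unfolding Ss_def using s finite_psupp_pvecs by blast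
  have supp_s: "{p. fst s p \<noteq> 0} \<subseteq> Ss" "{p. snd s p \<noteq> 0} \<subseteq> Ss"
    unfolding Ss_def psupp_def by auto
  define D where "D = (\<Sum>p\<in>Ss. fst s p * b (torus_proj L p)) - (\<Sum>p\<in>Ss. snd s p * a (torus_proj L p))"
  have "(torus_dot L b (wrap L N (fst s)) - torus_dot L (wrap L N (snd s)) a) mod int N
      = (torus_dot L b (wrap L N (fst s)) mod int N - torus_dot L (wrap L N (snd s)) a mod int N) mod int N"
    by (rule mod_diff_eq[symmetric])
  also have "\<dots> = D mod int N"
    unfolding D_def torus_dot_wrap_right_mod[OF L fSs supp_s(1)] torus_dot_wrap_left_mod[OF L fSs supp_s(2)]
    by (rule mod_diff_eq)
  finally have dvd_D: "int N dvd D" using dvd unfolding a_def b_def dvd_eq_mod_eq_0 by simp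
  have F: "finite (psupp s \<union> psupp (lift_a, lift_b))"
    using fSs finite_subset[OF psupp_lift finite_lift_region] unfolding Ss_def by simp
  have "int N dvd (\<Sum>p\<in>Ss. snd s p * lift_a p - lift_b p * fst s p)"
  proof (cases "\<exists>q\<in>Ss. in_box1 q \<or> in_box2 q")
    case True
    then obtain q where q: "q \<in> Ss" "in_box1 q \<or> in_box2 q" by blast
    obtain x0 y0 and d :: nat where d: "real d < real lS" "Ss \<subseteq> {x0..<x0 + int d} \<times> {y0..<y0 + int d}"
      using local unfolding plane_linsize_lt_def Ss_def by blast
    have "near (int lS) q p" if "p \<in> Ss" for p
    proof -
      have "q \<in> {x0..<x0 + int d} \<times> {y0..<y0 + int d}" "p \<in> {x0..<x0 + int d} \<times> {y0..<y0 + int d}"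
        using d(2) q(1) that by blast+
      then show ?thesis unfolding near_def using d(1) by (auto simp: mem_Times_iff)
    qed
    then have "lift_a p = a (torus_proj L p) \<and> lift_b p = b (torus_proj L p)" if "p \<in> Ss" for p
      using lift_near[OF q(2)] that unfolding a_def b_def by blast
    then have "(\<Sum>p\<in>Ss. snd s p * lift_a p - lift_b p * fst s p)
        = (\<Sum>p\<in>Ss. snd s p * a (torus_proj L p) - fst s p * b (torus_proj L p))"
      by (intro sum.cong) (simp_all add: mult.commute)
    also have "\<dots> = - D" unfolding D_def by (simp add: sum_subtractf)
    finally show ?thesis using dvd_D by simp
  next
    case False
    then have "(\<Sum>p\<in>Ss. snd s p * lift_a p - lift_b p * fst s p) = 0"
      using lift_outside by (intro sum.neutral) auto
    then show ?thesis by simp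
  qed
  moreover have "symp_sum s (lift_a, lift_b) (psupp s \<union> psupp (lift_a, lift_b))
      = (\<Sum>p\<in>Ss. snd s p * lift_a p - lift_b p * fst s p)"
    unfolding Ss_def by (subst symp_sum_psupp_left[OF F]) auto
  ultimately show ?thesis using pcomm_iff_symp_sum[OF F subset_refl] by simp
qed

end

subsection \<open>Correctability\<close>

lemma wrap_center_in_op_center:
  assumes N: "N > 0" and L: "L > 0" and code: "ti_topo_subsys_code N lG lS G"
    and s: "s \<in> plane_center N G"
  shows "W L N (wrap L N (fst s)) (wrap L N (snd s)) \<in> op_center L N (gauge_ops L N G)"
proof -
  have G: "G \<subseteq> pvecs N" and transl: "\<And>u g. g \<in> G \<Longrightarrow> pshift u g \<in> G"
    using code unfolding ti_topo_subsys_code_def plane_subgroup_def by auto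
  have sG: "s \<in> G" using s unfolding plane_center_def by blast
  let ?Ws = "W L N (wrap L N (fst s)) (wrap L N (snd s))"
  have "?Ws \<in> gauge_ops L N G" unfolding gauge_ops_def
    by (rule CollectI, rule exI[of _ 1], rule exI[of _ s]) (simp add: sG)
  moreover have "mult_op L N ?Ws K = mult_op L N K ?Ws" if K: "K \<in> gauge_ops L N G" for K
  proof -
    obtain c g where cg: "K = smult_op c (W L N (wrap L N (fst g)) (wrap L N (snd g)))" "g \<in> G"
      using K unfolding gauge_ops_def by blast
    have "pcomm N s (pshift u g)" for u
      using s transl[OF cg(2)] unfolding plane_center_def by blast
    then have "int N dvd torus_dot L (wrap L N (snd s)) (wrap L N (fst g))
                         - torus_dot L (wrap L N (snd g)) (wrap L N (fst s))"
      using wrap_symp_dvd[OF L] sG cg(2) G finite_psupp_pvecs by blast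
    then have "mult_op L N ?Ws (W L N (wrap L N (fst g)) (wrap L N (snd g)))
             = mult_op L N (W L N (wrap L N (fst g)) (wrap L N (snd g))) ?Ws"
      using W_commute_iff_dvd[OF N wrap_tvecs[OF N] wrap_tvecs[OF N]] by blast
    then show ?thesis unfolding cg(1) mult_op_smult_op_left mult_op_smult_op_right by simp
  qed
  ultimately show ?thesis unfolding op_center_def by blast
qed

lemma tsupp_wrap_subset_torus_box:
  assumes L: "L > 0" and fs: "finite (psupp s)"
    and box: "psupp s \<subseteq> {x0..<x0 + int d} \<times> {y0..<y0 + int d}"
  shows "tsupp (wrap L N (fst s)) (wrap L N (snd s)) \<subseteq> torus_box L x0 y0 d"
proof
  fix t assume t: "t \<in> tsupp (wrap L N (fst s)) (wrap L N (snd s))"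
  then have tt: "t \<in> torus_sites L" unfolding tsupp_def wrap_def by (auto split: if_splits)
  have supp: "{p. fst s p \<noteq> 0} \<subseteq> psupp s" "{p. snd s p \<noteq> 0} \<subseteq> psupp s"
    unfolding psupp_def by auto
  have "{p\<in>psupp s. torus_proj L p = t} \<noteq> {}"
  proof
    assume empty: "{p\<in>psupp s. torus_proj L p = t} = {}"
    have "wrap L N (fst s) t = 0" "wrap L N (snd s) t = 0"
      unfolding wrap_eq_fiber_sum[OF tt fs supp(1)] wrap_eq_fiber_sum[OF tt fs supp(2)] empty by simp_all
    then show False using t unfolding tsupp_def by simp
  qed
  then obtain p where p: "p \<in> psupp s" "torus_proj L p = t" by blast
  then have "in_box x0 y0 (int d) p" using box unfolding in_box_def by (auto simp: mem_Times_iff)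
  then show "t \<in> torus_box L x0 y0 d" using torus_proj_in_box p(2) by blast
qed

lemma op_linsize_lt_wrap:
  assumes N: "N > 0" and L: "L > 0" and fs: "finite (psupp s)" and c: "cmod c = 1"
    and local: "plane_linsize_lt (psupp s) r"
  shows "op_linsize_lt L N (smult_op c (W L N (wrap L N (fst s)) (wrap L N (snd s)))) r"
proof -
  obtain x0 y0 and d :: nat where d: "real d < r" "psupp s \<subseteq> {x0..<x0 + int d} \<times> {y0..<y0 + int d}"
    using local unfolding plane_linsize_lt_def by blast
  have "tsupp (wrap L N (fst s)) (wrap L N (snd s)) \<subseteq> torus_box L x0 y0 d"
    by (rule tsupp_wrap_subset_torus_box[OF L fs d(2)])
  then have "torus_linsize_lt L (tsupp (wrap L N (fst s)) (wrap L N (snd s))) r"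
    unfolding torus_linsize_lt_def torus_box_def using d(1) by blast
  then show ?thesis unfolding op_linsize_lt_def using c wrap_tvecs[OF N] by blast
qed

text \<open>This is where the topological condition enters: the plane centralizer of the local
  stabilizers is the gauge group.\<close>

lemma commutes_local_center_imp_gauge:
  assumes N: "N > 0" and code: "ti_topo_subsys_code N lG lS G" and e: "e \<in> pvecs N"
    and comm: "\<And>s. s \<in> plane_center N G \<Longrightarrow> plane_linsize_lt (psupp s) (real lS) \<Longrightarrow> pcomm N s e"
  shows "e \<in> G"
proof -
  have G: "G \<subseteq> pvecs N" using code unfolding ti_topo_subsys_code_def plane_subgroup_def by simp
  have generated: "plane_center N G = plane_span N {s\<in>plane_center N G. plane_linsize_lt (psupp s) (real lS)}"
    and centralizer: "{p\<in>pvecs N. \<forall>s\<in>plane_center N G. pcomm N p s} = G"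
    using code unfolding ti_topo_subsys_code_def by auto
  have "{s\<in>plane_center N G. plane_linsize_lt (psupp s) (real lS)} \<subseteq> {v\<in>pvecs N. pcomm N v e}"
  proof
    fix s assume "s \<in> {s\<in>plane_center N G. plane_linsize_lt (psupp s) (real lS)}"
    moreover have "plane_center N G \<subseteq> pvecs N" using G unfolding plane_center_def by auto
    ultimately show "s \<in> {v\<in>pvecs N. pcomm N v e}" using comm by auto
  qed
  then have center_commutes: "plane_center N G \<subseteq> {v\<in>pvecs N. pcomm N v e}"
    by (subst generated) (rule plane_span_least[OF plane_subgroup_commutant[OF N e]])
  then have "pcomm N e s" if "s \<in> plane_center N G" for s
  proof -
    have "s \<in> pvecs N" "pcomm N s e" using that center_commutes by auto
    then show ?thesis using pcomm_commute[OF finite_psupp_pvecs finite_psupp_pvecs[OF e]] by blast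
  qed
  then show ?thesis using centralizer e by blast
qed

lemma gauge_op_commutes_stabilizers:
  assumes stab: "torus_stabilizer_group L N G S" and Gop: "Gop \<in> gauge_ops L N G" and B: "B \<in> S"
  shows "mult_op L N B Gop = mult_op L N Gop B"
proof -
  obtain c where c: "cmod c = 1" "smult_op c B \<in> op_center L N (gauge_ops L N G)"
    using stab B unfolding torus_stabilizer_group_def prop_sets_def by blast
  then have "mult_op L N (smult_op c B) Gop = mult_op L N Gop (smult_op c B)"
    using Gop unfolding op_center_def by blast
  then have "smult_op c (mult_op L N B Gop) = smult_op c (mult_op L N Gop B)"
    unfolding mult_op_smult_op_left mult_op_smult_op_right .
  moreover have "c \<noteq> 0" using c(1) by auto
  ultimately show ?thesis by (rule smult_op_cancel[rotated])
qed

lemma small_errorsE: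
  assumes "E \<in> small_errors L N lS"
  obtains c a b x0 y0 d where "cmod c = 1" "a \<in> tvecs L N" "b \<in> tvecs L N"
    "E = smult_op c (W L N a b)" "tsupp a b \<subseteq> torus_box L x0 y0 d" "2 * (int d + int lS) < int L"
proof -
  obtain c a b where cab: "cmod c = 1" "a \<in> tvecs L N" "b \<in> tvecs L N" "E = smult_op c (W L N a b)"
    "torus_linsize_lt L (tsupp a b) (real L / 2 - real lS)"
    using assms unfolding small_errors_def op_linsize_lt_def by blast
  obtain x0 y0 and d :: nat where d: "real d < real L / 2 - real lS" "tsupp a b \<subseteq> torus_box L x0 y0 d"
    using cab(5) unfolding torus_linsize_lt_def torus_box_def by blast
  have "real (2 * (d + lS)) < real L" using d(1) by simp
  then have "2 * (int d + int lS) < int L" by (simp only: of_nat_less_iff) presburger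
  then show ?thesis using cab d that by blast
qed

text \<open>Moving the second box by a multiple of L (which does not change its image on the torus)
  places it in a window of side L relative to the first box.\<close>

lemma small_error_pair_lift:
  assumes N: "N > 0" and E1: "E1 \<in> small_errors L N lS" and E2: "E2 \<in> small_errors L N lS"
  obtains c1 c2 x1 y1 x2 y2 d1 d2 a1 b1 a2 b2
  where "E1 = smult_op c1 (W L N a1 b1)" "E2 = smult_op c2 (W L N a2 b2)"
    "error_pair_lift L N lS x1 y1 x2 y2 d1 d2 a1 b1 a2 b2"
proof -
  obtain c1 a1 b1 x1 y1 d1 where e1: "cmod c1 = 1" "a1 \<in> tvecs L N" "b1 \<in> tvecs L N"
      "E1 = smult_op c1 (W L N a1 b1)" "tsupp a1 b1 \<subseteq> torus_box L x1 y1 d1" "2 * (int d1 + int lS) < int L"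
    using small_errorsE[OF E1] .
  obtain c2 a2 b2 x2 y2 d2 where e2: "cmod c2 = 1" "a2 \<in> tvecs L N" "b2 \<in> tvecs L N"
      "E2 = smult_op c2 (W L N a2 b2)" "tsupp a2 b2 \<subseteq> torus_box L x2 y2 d2" "2 * (int d2 + int lS) < int L"
    using small_errorsE[OF E2] .
  have L: "L > 0" using e1(6) by simp
  define x0 where "x0 = x1 - (int lS + int d2)"
  define y0 where "y0 = y1 - (int lS + int d2)"
  define x2' where "x2' = x0 + (x2 - x0) mod int L"
  define y2' where "y2' = y0 + (y2 - y0) mod int L"
  have "x2' mod int L = (x0 + (x2 - x0)) mod int L" "y2' mod int L = (y0 + (y2 - y0)) mod int L"
    unfolding x2'_def y2'_def by (rule mod_add_right_eq)+
  then have "x2' mod int L = x2 mod int L" "y2' mod int L = y2 mod int L" by simp_all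
  then have "torus_box L x2 y2 d2 = torus_box L x2' y2' d2" by (rule torus_box_mod_cong[symmetric])
  moreover have "0 \<le> (x2 - x0) mod int L" "(x2 - x0) mod int L < int L"
       "0 \<le> (y2 - y0) mod int L" "(y2 - y0) mod int L < int L" using L by simp_all
  then have "boxes_apart (int lS) (int L) x1 y1 (int d1) x2' y2' (int d2)"
    unfolding boxes_apart_def x2'_def y2'_def x0_def y0_def using e1(6) e2(6) by (intro conjI) (simp_all add: algebra_simps)
  ultimately have "error_pair_lift L N lS x1 y1 x2' y2' d1 d2 a1 b1 a2 b2"
    by unfold_locales (use N L e1 e2 in simp_all)
  then show ?thesis using that e1 e2 by blast
qed

lemma (in error_pair_lift) difference_in_gauge_ops:
  assumes code: "ti_topo_subsys_code N lG lS G" and stab: "torus_stabilizer_group L N G S"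
    and comm: "\<And>A. A \<in> S \<Longrightarrow> op_linsize_lt L N A (real lS) \<Longrightarrow>
       mult_op L N (W L N (vec_add N a1 (vec_neg N a2)) (vec_add N b1 (vec_neg N b2))) A
       = mult_op L N A (W L N (vec_add N a1 (vec_neg N a2)) (vec_add N b1 (vec_neg N b2)))"
  shows "W L N (vec_add N a1 (vec_neg N a2)) (vec_add N b1 (vec_neg N b2)) \<in> gauge_ops L N G"
proof -
  let ?a = "vec_add N a1 (vec_neg N a2)" and ?b = "vec_add N b1 (vec_neg N b2)"
  have G: "G \<subseteq> pvecs N" using code unfolding ti_topo_subsys_code_def plane_subgroup_def by simp
  have "pcomm N s (lift_a, lift_b)"
    if s: "s \<in> plane_center N G" "plane_linsize_lt (psupp s) (real lS)" for s
  proof -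
    have sP: "s \<in> pvecs N" using s(1) G unfolding plane_center_def by auto
    let ?Ws = "W L N (wrap L N (fst s)) (wrap L N (snd s))"
    obtain c where c: "cmod c = 1" "smult_op c ?Ws \<in> S"
      using wrap_center_in_op_center[OF N L code s(1)] stab
      unfolding torus_stabilizer_group_def prop_sets_def by blast
    have "op_linsize_lt L N (smult_op c ?Ws) (real lS)"
      by (rule op_linsize_lt_wrap[OF N L finite_psupp_pvecs[OF sP] c(1) s(2)])
    then have "mult_op L N (W L N ?a ?b) (smult_op c ?Ws) = mult_op L N (smult_op c ?Ws) (W L N ?a ?b)"
      by (rule comm[OF c(2)])
    then have "smult_op c (mult_op L N (W L N ?a ?b) ?Ws) = smult_op c (mult_op L N ?Ws (W L N ?a ?b))"
      unfolding mult_op_smult_op_left mult_op_smult_op_right .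
    moreover have "c \<noteq> 0" using c(1) by auto
    ultimately have Ws_comm: "mult_op L N (W L N ?a ?b) ?Ws = mult_op L N ?Ws (W L N ?a ?b)"
      by (rule smult_op_cancel[rotated])
    have "?a \<in> tvecs L N"
      using vec_add_tvecs[OF N] vec_neg_tvecs[OF N] tvecs1 tvecs2 by blast
    then have "int N dvd torus_dot L ?b (wrap L N (fst s)) - torus_dot L (wrap L N (snd s)) ?a"
      using Ws_comm W_commute_iff_dvd[OF N _ wrap_tvecs[OF N]] by blast
    then show ?thesis by (rule lift_pcomm_local[OF sP s(2)])
  qed
  then have "(lift_a, lift_b) \<in> G"
    by (rule commutes_local_center_imp_gauge[OF N code lift_pvecs])
  moreover have "W L N (wrap L N lift_a) (wrap L N lift_b) = W L N ?a ?b"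
    using wrap_lift by simp
  ultimately show ?thesis unfolding gauge_ops_def
    by (intro CollectI exI[of _ 1] exI[of _ "(lift_a, lift_b)"]) simp
qed

lemma proj_sandwich_eq_0_if_noncommuting:
  assumes N: "N > 0" and P: "is_proj_onto L N P (code_space L N (local_stab L N lS S))"
    and stab: "torus_stabilizer_group L N G S"
    and A: "A \<in> S" "op_linsize_lt L N A (real lS)"
    and noncomm: "mult_op L N (W L N a b) A \<noteq> mult_op L N A (W L N a b)"
  shows "mult_op L N (mult_op L N P (smult_op c (W L N a b))) P = (\<lambda>_ _. 0)"
proof -
  have S: "S \<subseteq> torus_paulis L N" using stab unfolding torus_stabilizer_group_def by simp
  obtain cA aA bA where cA: "A = smult_op cA (W L N aA bA)"
    using A(1) S unfolding torus_paulis_def by blast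
  define w where "w = omega N (torus_dot L b aA - torus_dot L bA a)"
  have scalar: "cA * (c * w) = w * (c * cA)" by (simp add: ac_simps)
  have "mult_op L N (smult_op c (W L N a b)) A = smult_op (cA * (c * w)) (mult_op L N (W L N aA bA) (W L N a b))"
    unfolding cA mult_op_smult_op_left mult_op_smult_op_right W_commute_phase[OF N, of L a b aA bA] w_def
    by (simp only: smult_op_smult_op)
  also have "\<dots> = smult_op w (mult_op L N A (smult_op c (W L N a b)))"
    unfolding cA mult_op_smult_op_left mult_op_smult_op_right scalar by (simp only: smult_op_smult_op)
  finally have phase: "mult_op L N (smult_op c (W L N a b)) A = smult_op w (mult_op L N A (smult_op c (W L N a b)))" .
  have w: "w \<noteq> 1"
  proof
    assume "w = 1"
    then have "mult_op L N (W L N a b) (W L N aA bA) = mult_op L N (W L N aA bA) (W L N a b)"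
      using W_commute_phase[OF N, of L a b aA bA] unfolding w_def by simp
    then show False using noncomm unfolding cA mult_op_smult_op_left mult_op_smult_op_right by argo
  qed
  have "{A\<in>S. op_linsize_lt L N A (real lS)} \<subseteq> local_stab L N lS S"
    unfolding local_stab_def by (rule op_group_gen_base)
  then have AT: "A \<in> local_stab L N lS S" using A by blast
  then have "adj_op A \<in> local_stab L N lS S"
    unfolding local_stab_def by (rule adj_op_in_op_group_gen)
  then show ?thesis by (rule proj_sandwich_eq_0_if_phase_commute[OF P AT _ phase w])
qed

theorem mainTheorem2:
  fixes N L lG lS :: nat and G :: "(pvec \<times> pvec) set" and S :: "op set"
    and P E1 E2 :: op
  assumes "2 \<le> N"
    and "ti_topo_subsys_code N lG lS G"
    and "torus_stabilizer_group L N G S"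
    and "is_proj_onto L N P (code_space L N (local_stab L N lS S))"
    and "E1 \<in> small_errors L N lS" and "E2 \<in> small_errors L N lS"
  shows "\<exists>Gop\<in>gauge_ops L N G. \<exists>c::complex.
           mult_op L N (mult_op L N P (mult_op L N E1 (adj_op E2))) P = smult_op c (mult_op L N Gop P)"
proof -
  note code = assms(2) and stab = assms(3) and P = assms(4)
  have N: "N > 0" using assms(1) by simp
  obtain c1 c2 x1 y1 x2 y2 d1 d2 a1 b1 a2 b2 where
    E: "E1 = smult_op c1 (W L N a1 b1)" "E2 = smult_op c2 (W L N a2 b2)"
    and lift: "error_pair_lift L N lS x1 y1 x2 y2 d1 d2 a1 b1 a2 b2"
    by (rule small_error_pair_lift[OF N assms(5,6)])
  define Gop where "Gop = W L N (vec_add N a1 (vec_neg N a2)) (vec_add N b1 (vec_neg N b2))"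
  define cE where "cE = c1 * cnj c2 * omega N (torus_dot L b2 a2) * omega N (torus_dot L b1 (vec_neg N a2))"
  have E12: "mult_op L N E1 (adj_op E2) = smult_op cE Gop"
    unfolding E Gop_def cE_def by (rule mult_op_adj_op_paulis[OF N])
  show ?thesis
  proof (cases "\<forall>A\<in>S. op_linsize_lt L N A (real lS) \<longrightarrow> mult_op L N Gop A = mult_op L N A Gop")
    case True
    then have Gop: "Gop \<in> gauge_ops L N G"
      unfolding Gop_def by (intro error_pair_lift.difference_in_gauge_ops[OF lift code stab]) blast
    have S: "S \<subseteq> torus_paulis L N" "op_group L N S"
      using stab unfolding torus_stabilizer_group_def by simp_all
    have "local_stab L N lS S \<subseteq> S"
      unfolding local_stab_def by (rule op_group_gen_least[OF S(2)]) blast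
    then have "mult_op L N (mult_op L N P (smult_op cE Gop)) P = smult_op cE (mult_op L N Gop P)"
      by (rule proj_sandwich_commuting[OF P _ S(1) gauge_op_commutes_stabilizers[OF stab Gop]])
    then show ?thesis using Gop unfolding E12 by blast
  next
    case False
    then obtain A where A: "A \<in> S" "op_linsize_lt L N A (real lS)"
      and noncomm: "mult_op L N Gop A \<noteq> mult_op L N A Gop" by blast
    let ?G0 = "W L N (wrap L N (fst pzero)) (wrap L N (snd pzero))"
    have "?G0 \<in> gauge_ops L N G"
      using code unfolding ti_topo_subsys_code_def plane_subgroup_def gauge_ops_def
      by (intro CollectI exI[of _ 1] exI[of _ pzero]) simp
    moreover have "mult_op L N (mult_op L N P (smult_op cE Gop)) P = smult_op 0 (mult_op L N ?G0 P)"
      unfolding smult_op_0 Gop_def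
      by (rule proj_sandwich_eq_0_if_noncommuting[OF N P stab A noncomm[unfolded Gop_def]])
    ultimately show ?thesis unfolding E12 by blast
  qed
qed

end
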